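(* Let $B,D\in\widehat{\mathbb F_q^\times}$ and set $C=D^2$. Assume $D\neq\phi$ and $B\neq D$. Then for all $x\in\mathbb F_q$, $$\overline C(1-x)\,{}_2\mathbb F_1\!\left[\begin{matrix}D\phi\overline B&D\\&C\overline B\end{matrix};\frac{-4x}{(1-x)^2}\right]={}_2\mathbb F_1\!\left[\begin{matrix}B&C\\&C\overline B\end{matrix};x\right]-\delta(1-x)\frac{J(C,\overline B^2)}{J(C,\overline B)}-\delta(1+x)\frac{J(\overline B,D\phi)}{J(C,\overline B)},$$ where for $x=1$ the left-hand side is interpreted as $0$.
   Context: $\mathbb F_q$ is a finite field with $q$ elements, $q$ a power of an odd prime $p$. $\widehat{\mathbb F_q^\times}$ is the group of multiplicative characters $\chi:\mathbb F_q^\times\to\mathbb C^\times$; every character, including the trivial character $\varepsilon$, is extended to $\mathbb F_q$ by $\chi(0)=0$. $\phi$ is the quadratic character, $\overline\chi$ denotes the complex-conjugate (inverse) character, and products/powers of characters are pointwise. For $x\in\mathbb F_q$, $\delta(x)=1$ if $x=0$ and $0$ otherwise. Jacobi sum: $J(A,B)=\sum_{x\in\mathbb F_q}A(x)B(1-x)$. Period function: ${}_2\mathbb P_1\!\left[\begin{matrix}A&B\\&C\end{matrix};\lambda\right]=\sum_{y\in\mathbb F_q}B(y)\,\overline BC(1-y)\,\overline A(1-\lambda y)$; normalized function ${}_2\mathbb F_1\!\left[\begin{matrix}A&B\\&C\end{matrix};\lambda\right]=\frac{1}{J(B,C\overline B)}\,{}_2\mathbb P_1\!\left[\begin{matrix}A&B\\&C\end{matrix};\lambda\right]$.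 *)

theory Defs
  imports Complex_Main
begin

text \<open>Finite fields are modelled by a type of class {field, finite}; a multiplicative
character is a function to the complex numbers that is multiplicative on the
nonzero elements, sends 1 to 1, and is extended by 0 at 0.\<close>

definition mult_char :: "('a::{field,finite} \<Rightarrow> complex) \<Rightarrow> bool" where
  "mult_char \<chi> \<longleftrightarrow> \<chi> 0 = 0 \<and> \<chi> 1 = 1 \<and>
     (\<forall>x y. x \<noteq> 0 \<longrightarrow> y \<noteq> 0 \<longrightarrow> \<chi> (x * y) = \<chi> x * \<chi> y)"

definition triv_char :: "'a::{field,finite} \<Rightarrow> complex" where
  "triv_char x = (if x = 0 then 0 else 1)"

definition quad_char :: "'a::{field,finite} \<Rightarrow> complex" where
  "quad_char x = (if x = 0 then 0 else if (\<exists>y. y ^ 2 = x) then 1 else -1)"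

definition char_conj :: "('a \<Rightarrow> complex) \<Rightarrow> 'a \<Rightarrow> complex" where
  "char_conj \<chi> x = cnj (\<chi> x)"

definition char_mult :: "('a \<Rightarrow> complex) \<Rightarrow> ('a \<Rightarrow> complex) \<Rightarrow> 'a \<Rightarrow> complex" where
  "char_mult A B x = A x * B x"

definition kdelta :: "'a::zero \<Rightarrow> complex" where
  "kdelta x = (if x = 0 then 1 else 0)"

definition jacobi :: "('a::{field,finite} \<Rightarrow> complex) \<Rightarrow> ('a \<Rightarrow> complex) \<Rightarrow> complex" where
  "jacobi A B = (\<Sum>x\<in>UNIV. A x * B (1 - x))"

definition P21 :: "('a::{field,finite} \<Rightarrow> complex) \<Rightarrow> ('a \<Rightarrow> complex) \<Rightarrow> ('a \<Rightarrow> complex) \<Rightarrow> 'a \<Rightarrow> complex" where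
  "P21 A B C t = (\<Sum>y\<in>UNIV. B y * char_mult (char_conj B) C (1 - y) * char_conj A (1 - t * y))"

definition F21 :: "('a::{field,finite} \<Rightarrow> complex) \<Rightarrow> ('a \<Rightarrow> complex) \<Rightarrow> ('a \<Rightarrow> complex) \<Rightarrow> 'a \<Rightarrow> complex" where
  "F21 A B C t = P21 A B C t / jacobi B (char_mult C (char_conj B))"

end

theory Submission
  imports Defs
begin

text \<open>Write \<open>\<chi>\<^sup>*\<close> for the conjugate character and \<open>t = -4x/(1-x)\<^sup>2\<close>. Multiplying the left period by
\<open>J(D, B\<^sup>*)\<close> and substituting linearly in the Jacobi sum turns it into \<open>\<Sum>\<^sub>m B\<^sup>*(m) W\<^sub>m\<close>, while the
right period regroups as \<open>\<Sum>\<^sub>m B\<^sup>*(m) \<Sum>\<^bsub>(1-y)(1-xy)=m\<^esub> D(y)\<^sup>2\<close>. A Moebius substitution brings \<open>W\<^sub>m\<close>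
to a sum of \<open>D(s) (D\<^sup>*\<phi>)((s+\<beta>)(s+\<gamma>))\<close>, and the identity
\<open>\<Sum>\<^sub>s \<phi>(s) h(s + c/s) = \<Sum>\<^bsub>\<sigma>\<^sup>2=c\<^esub> \<Sum>\<^sub>\<eta> \<phi>(\<eta>) h(\<eta> + 2\<sigma>)\<close> evaluates it as \<open>J(\<phi>, D)\<close> times a sum over
the square roots \<open>\<sigma>\<close> of \<open>\<beta>\<gamma>\<close>. These roots correspond affinely to the solutions \<open>y\<close> of
\<open>(1-y)(1-xy) = m\<close>, term by term, so \<open>(D\<^sup>2)\<^sup>*(1-x) W\<^sub>m = J(D, D) \<Sum>\<^bsub>(1-y)(1-xy)=m\<^esub> D(y)\<^sup>2\<close>. The
duplication formula \<open>J(\<phi>, D) = D(4) J(D, D)\<close> and the associativity of Jacobi sums then match the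
normalisations. The points \<open>x = 0, \<plusminus>1\<close>, the fibre \<open>m = 1\<close> and the trivial character \<open>D\<close> are
treated separately.\<close>

section \<open>Characters of a finite field\<close>

lemma two_neq_zero:
  assumes "odd CHAR('a::{field,finite})" shows "(2::'a) \<noteq> 0"
proof
  assume "(2::'a) = 0"
  hence "CHAR('a) dvd 2" by (metis of_nat_numeral of_nat_eq_0_iff_char_dvd)
  hence "CHAR('a) \<le> 2" by (simp add: dvd_imp_le)
  moreover have "CHAR('a) \<noteq> 0" "CHAR('a) \<noteq> 2" using assms odd_pos by fastforce+
  ultimately show False using CHAR_not_1[where 'a='a] by linarith
qed

lemma four_neq_zero:
  assumes "odd CHAR('a::{field,finite})" shows "(4::'a) \<noteq> 0"
  using two_neq_zero[OF assms] mult_eq_0_iff[of "2::'a" 2] by simp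

lemma neg_neq_self:
  fixes r :: "'a::{field,finite}"
  assumes "odd CHAR('a)" "r \<noteq> 0" shows "r \<noteq> - r"
proof
  assume "r = - r"
  hence "2 * r = 0" by (metis mult_2 add.right_inverse)
  thus False using two_neq_zero[OF assms(1)] assms(2) by simp
qed

lemma power_card_minus_one:
  fixes x :: "'a::{field,finite}"
  assumes "x \<noteq> 0" shows "x ^ (card (UNIV::'a set) - 1) = 1"
proof -
  let ?U = "UNIV - {0::'a}"
  have cardU: "card ?U = card (UNIV::'a set) - 1" by (simp add: card_Diff_singleton)
  have bij: "bij_betw (\<lambda>y. x * y) ?U ?U"
    by (rule bij_betw_byWitness[where f'="\<lambda>y. inverse x * y"]) (auto simp: assms)
  have "prod (\<lambda>y. y) ?U = prod (\<lambda>y. x * y) ?U"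
    using prod.reindex_bij_betw[OF bij, of "\<lambda>y. y"] by simp
  also have "\<dots> = x ^ card ?U * prod (\<lambda>y. y) ?U" by (simp add: prod.distrib)
  finally have "x ^ card ?U * prod (\<lambda>y. y) ?U = 1 * prod (\<lambda>y. y) ?U" by simp
  moreover have "prod (\<lambda>y. y) ?U \<noteq> 0" by simp
  ultimately show ?thesis using cardU by (metis mult_right_cancel)
qed

lemma mult_char_zero: "mult_char \<chi> \<Longrightarrow> \<chi> 0 = 0"
  by (simp add: mult_char_def)

lemma mult_char_one: "mult_char \<chi> \<Longrightarrow> \<chi> 1 = 1"
  by (simp add: mult_char_def)

lemma mult_char_mult: "mult_char \<chi> \<Longrightarrow> \<chi> (x * y) = \<chi> x * \<chi> y"
  unfolding mult_char_def by (cases "x = 0 \<or> y = 0") auto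

lemma mult_char_power: "mult_char \<chi> \<Longrightarrow> \<chi> (x ^ n) = \<chi> x ^ n"
  by (induction n) (auto simp: mult_char_one mult_char_mult)

lemma norm_mult_char:
  fixes \<chi> :: "'a::{field,finite} \<Rightarrow> complex"
  assumes "mult_char \<chi>" "x \<noteq> 0" shows "norm (\<chi> x) = 1"
proof -
  have "card {0::'a, 1} \<le> card (UNIV::'a set)" by (rule card_mono) auto
  hence pos: "card (UNIV::'a set) - 1 > 0" by simp
  have "\<chi> x ^ (card (UNIV::'a set) - 1) = 1"
    using assms power_card_minus_one by (metis mult_char_one mult_char_power)
  hence "norm (\<chi> x) ^ (card (UNIV::'a set) - 1) = 1" by (metis norm_one norm_power)
  thus ?thesis using pos power_eq_imp_eq_base[of "norm (\<chi> x)" _ 1] by simp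
qed

lemma cnj_mult_char_mult:
  assumes "mult_char \<chi>" "x \<noteq> 0" shows "cnj (\<chi> x) * \<chi> x = 1"
  using complex_norm_square[of "\<chi> x"] norm_mult_char[OF assms] by (simp add: mult.commute)

lemma mult_char_nonzero:
  assumes "mult_char \<chi>" "x \<noteq> 0" shows "\<chi> x \<noteq> 0"
  using cnj_mult_char_mult[OF assms] by auto

lemma mult_char_inverse:
  assumes "mult_char \<chi>" shows "\<chi> (inverse x) = cnj (\<chi> x)"
proof (cases "x = 0")
  case False
  have "\<chi> x * \<chi> (inverse x) = 1"
    using mult_char_mult[OF assms, of x "inverse x"] False mult_char_one[OF assms] by simp
  thus ?thesis using cnj_mult_char_mult[OF assms False] mult_char_nonzero[OF assms False]
    by (metis mult.commute mult_left_cancel)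
qed (simp add: mult_char_zero[OF assms])

lemma mult_char_divide:
  assumes "mult_char \<chi>" shows "\<chi> (x / y) = \<chi> x * cnj (\<chi> y)"
  by (simp add: divide_inverse mult_char_mult[OF assms] mult_char_inverse[OF assms])

lemma mult_char_cnj: "mult_char \<chi> \<Longrightarrow> mult_char (\<lambda>x. cnj (\<chi> x))"
  unfolding mult_char_def by auto

lemma mult_char_times: "mult_char A \<Longrightarrow> mult_char B \<Longrightarrow> mult_char (\<lambda>x. A x * B x)"
  unfolding mult_char_def by auto

lemma mult_char_triv: "mult_char (triv_char :: 'a::{field,finite} \<Rightarrow> complex)"
  unfolding mult_char_def triv_char_def by auto

lemma mult_char_neg_one_square:
  assumes "mult_char \<chi>" shows "\<chi> (-1) * \<chi> (-1) = 1"
  using mult_char_mult[OF assms, of "-1" "-1"] mult_char_one[OF assms] by simp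

lemma cnj_mult_char_neg_one:
  assumes "mult_char \<chi>" shows "cnj (\<chi> (-1)) = \<chi> (-1)"
  using cnj_mult_char_mult[OF assms, of "-1"] mult_char_neg_one_square[OF assms]
  by (metis mult_cancel_right mult_zero_left neg_equal_0_iff_equal zero_neq_one)

lemma mult_char_eqI:
  assumes "mult_char A" "mult_char B" "\<And>x. x \<noteq> 0 \<Longrightarrow> A x = B x" shows "A = B"
proof
  fix x show "A x = B x"
    using assms mult_char_zero[OF assms(1)] mult_char_zero[OF assms(2)] by (cases "x = 0") auto
qed

lemma mult_char_neq_triv_witness:
  assumes "mult_char \<chi>" "\<chi> \<noteq> triv_char" obtains a where "a \<noteq> 0" "\<chi> a \<noteq> 1"
  using assms mult_char_eqI[OF assms(1) mult_char_triv] by (auto simp: triv_char_def)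

lemma cnj_char_neq_triv:
  assumes "\<chi> \<noteq> triv_char" shows "(\<lambda>x. cnj (\<chi> x)) \<noteq> triv_char"
proof
  assume h: "(\<lambda>x. cnj (\<chi> x)) = triv_char"
  have "\<chi> = triv_char"
  proof
    fix x show "\<chi> x = triv_char x" using fun_cong[OF h, of x]
      by (metis complex_cnj_cnj complex_cnj_one complex_cnj_zero triv_char_def)
  qed
  thus False using assms by simp
qed

lemma times_cnj_neq_triv:
  assumes "mult_char A" "mult_char B" "A \<noteq> B" shows "(\<lambda>x. A x * cnj (B x)) \<noteq> triv_char"
proof
  assume h: "(\<lambda>x. A x * cnj (B x)) = triv_char"
  have "B = A"
  proof (rule mult_char_eqI[OF assms(2,1)])
    fix x :: 'a assume x: "x \<noteq> 0"
    have "A x * cnj (B x) * B x = B x" using fun_cong[OF h, of x] x by (simp add: triv_char_def)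
    thus "B x = A x" using cnj_mult_char_mult[OF assms(2) x] by (simp add: mult.assoc)
  qed
  thus False using assms(3) by simp
qed

lemma cnj_mult_char_times_self:
  assumes "mult_char \<chi>" "f 0 = 0" shows "cnj (\<chi> u) * \<chi> u * f u = f u"
  using cnj_mult_char_mult[OF assms(1), of u] assms(2) by (cases "u = 0") auto

lemma sum_reindex_affine:
  fixes f :: "'a::{field,finite} \<Rightarrow> 'b::comm_monoid_add"
  assumes "a \<noteq> 0" shows "(\<Sum>x\<in>UNIV. f (a * x + b)) = (\<Sum>x\<in>UNIV. f x)"
proof -
  have "bij (\<lambda>x. a * x + b)"
    by (rule bij_betw_byWitness[where f'="\<lambda>y. inverse a * (y - b)"])
       (auto simp: assms mult.assoc[symmetric])
  thus ?thesis by (rule sum.reindex_bij_betw)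
qed

lemma sum_reindex_scale:
  fixes f :: "'a::{field,finite} \<Rightarrow> 'b::comm_monoid_add"
  assumes "a \<noteq> 0" shows "(\<Sum>x\<in>UNIV. f (a * x)) = (\<Sum>x\<in>UNIV. f x)"
  using sum_reindex_affine[OF assms, of f 0] by simp

lemma sum_reindex_shift:
  fixes f :: "'a::{field,finite} \<Rightarrow> 'b::comm_monoid_add"
  shows "(\<Sum>x\<in>UNIV. f (x + b)) = (\<Sum>x\<in>UNIV. f x)"
  using sum_reindex_affine[of 1 f b] by simp

lemma sum_reindex_reflect:
  fixes f :: "'a::{field,finite} \<Rightarrow> 'b::comm_monoid_add"
  shows "(\<Sum>x\<in>UNIV. f (b - x)) = (\<Sum>x\<in>UNIV. f x)"
  using sum_reindex_affine[of "-1" f b] by simp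

lemma sum_reindex_inverse:
  fixes f :: "'a::{field,finite} \<Rightarrow> 'b::comm_monoid_add"
  assumes "c \<noteq> 0" shows "(\<Sum>s\<in>UNIV. f (c * inverse s)) = (\<Sum>s\<in>UNIV. f s)"
proof -
  have "bij (\<lambda>s. c * inverse s)"
    by (rule bij_betw_byWitness[where f'="\<lambda>s. c * inverse s"]) (auto simp: assms)
  thus ?thesis by (rule sum.reindex_bij_betw)
qed

lemma sum_mult_char:
  fixes \<chi> :: "'a::{field,finite} \<Rightarrow> complex"
  assumes "mult_char \<chi>" "\<chi> \<noteq> triv_char" shows "(\<Sum>x\<in>UNIV. \<chi> x) = 0"
proof -
  obtain a where a: "a \<noteq> 0" "\<chi> a \<noteq> 1" using mult_char_neq_triv_witness[OF assms] .
  have "(\<Sum>x\<in>UNIV. \<chi> x) = (\<Sum>x\<in>UNIV. \<chi> (a * x))" by (rule sum_reindex_scale[OF a(1), symmetric])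
  also have "\<dots> = \<chi> a * (\<Sum>x\<in>UNIV. \<chi> x)" by (simp add: mult_char_mult[OF assms(1)] sum_distrib_left)
  finally have "(1 - \<chi> a) * (\<Sum>x\<in>UNIV. \<chi> x) = 0" by (simp add: algebra_simps)
  thus ?thesis using a(2) by simp
qed

lemma sum_triv_char_times:
  fixes g :: "'a::{field,finite} \<Rightarrow> complex"
  shows "(\<Sum>Y\<in>UNIV. triv_char Y * g Y) = (\<Sum>Y\<in>UNIV. g Y) - g 0"
proof -
  have "(\<Sum>Y\<in>UNIV. triv_char Y * g Y) = (\<Sum>Y\<in>UNIV. g Y - (if Y = 0 then g Y else 0))"
    by (rule sum.cong) (auto simp: triv_char_def)
  thus ?thesis by (simp add: sum_subtractf)
qed

section \<open>Squares and the quadratic character\<close>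

lemma card_sqrt:
  fixes w :: "'a::{field,finite}"
  assumes "odd CHAR('a)"
  shows "of_nat (card {s. s^2 = w}) = 1 + quad_char w"
proof (cases "\<exists>y. y^2 = w")
  case True
  then obtain r where r: "r^2 = w" by blast
  hence "{s. s^2 = w} = {r, - r}" using power2_eq_iff[of _ r] by auto
  moreover have "card {r, - r} = (if r = 0 then 1 else 2)" using neg_neq_self[OF assms] by auto
  ultimately show ?thesis using r by (auto simp: quad_char_def)
next
  case False
  moreover have "w \<noteq> 0" using False by (metis zero_power2)
  ultimately show ?thesis by (simp add: quad_char_def)
qed

lemma card_squares_eq_card_nonsquares:
  assumes "odd CHAR('a::{field,finite})"
  shows "card {w::'a. w \<noteq> 0 \<and> (\<exists>y. y^2 = w)} = card {w::'a. w \<noteq> 0 \<and> \<not>(\<exists>y. y^2 = w)}"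
proof -
  let ?N = "UNIV - {0::'a}"
  let ?S = "{w::'a. w \<noteq> 0 \<and> (\<exists>y. y^2 = w)}"
  let ?T = "{w::'a. w \<noteq> 0 \<and> \<not>(\<exists>y. y^2 = w)}"
  have sub: "(\<lambda>x. x^2) ` ?N \<subseteq> ?S" by auto
  have "(\<Sum>w\<in>?S. card {x \<in> ?N. x^2 = w}) = card ?N"
    using sum.group[OF finite finite sub, of "\<lambda>_. 1::nat"] by (simp only: card_eq_sum)
  moreover have "card {x \<in> ?N. x^2 = w} = 2" if "w \<in> ?S" for w
  proof -
    have "{x \<in> ?N. x^2 = w} = {x. x^2 = w}" using that by auto
    moreover have "of_nat (card {x. x^2 = w}) = (of_nat 2 :: complex)"
      using card_sqrt[OF assms, of w] that by (simp add: quad_char_def)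
    ultimately show ?thesis by (simp only: of_nat_eq_iff)
  qed
  ultimately have "card ?N = 2 * card ?S" by simp
  moreover have "?N = ?S \<union> ?T" "?S \<inter> ?T = {}" by auto
  ultimately show ?thesis by (simp add: card_Un_disjoint)
qed

text \<open>Multiplication by a nonsquare maps the squares injectively into the equinumerous set of
nonsquares, hence onto it.\<close>

lemma nonsquare_mult_nonsquare:
  fixes n m :: "'a::{field,finite}"
  assumes "odd CHAR('a)" "n \<noteq> 0" "\<not>(\<exists>y. y^2 = n)" "m \<noteq> 0" "\<not>(\<exists>y. y^2 = m)"
  shows "\<exists>y. y^2 = n * m"
proof -
  let ?S = "{w::'a. w \<noteq> 0 \<and> (\<exists>y. y^2 = w)}"
  let ?T = "{w::'a. w \<noteq> 0 \<and> \<not>(\<exists>y. y^2 = w)}"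
  have sub: "(\<lambda>s. n * s) ` ?S \<subseteq> ?T"
  proof (rule image_subsetI)
    fix s assume "s \<in> ?S"
    then obtain y where y: "y \<noteq> 0" "s = y^2" by auto
    have "\<not>(\<exists>z. z^2 = n * s)"
    proof
      assume "\<exists>z. z^2 = n * s"
      then obtain z where "z^2 = n * y^2" using y by auto
      hence "(z / y)^2 = n" using y by (simp add: power_divide)
      thus False using assms(3) by blast
    qed
    thus "n * s \<in> ?T" using y assms(2) by simp
  qed
  have "inj_on (\<lambda>s. n * s) ?S" using assms(2) by (auto simp: inj_on_def)
  hence "card ((\<lambda>s. n * s) ` ?S) = card ?T"
    using card_squares_eq_card_nonsquares[OF assms(1)] by (simp add: card_image)
  hence "(\<lambda>s. n * s) ` ?S = ?T" using sub by (intro card_subset_eq) auto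
  moreover have "m \<in> ?T" using assms by blast
  ultimately obtain y where "m = n * y^2" by blast
  hence "(n * y)^2 = n * m" by (simp add: power2_eq_square)
  thus ?thesis by blast
qed

lemma square_mult_iff:
  fixes x y :: "'a::{field,finite}"
  assumes "odd CHAR('a)" "x \<noteq> 0" "y \<noteq> 0"
  shows "(\<exists>c. c^2 = x * y) \<longleftrightarrow> ((\<exists>a. a^2 = x) \<longleftrightarrow> (\<exists>b. b^2 = y))"
proof (cases "\<exists>a. a^2 = x")
  case True
  then obtain a where a: "a^2 = x" by blast
  have "(\<exists>c. c^2 = x * y) \<longleftrightarrow> (\<exists>b. b^2 = y)"
  proof
    assume "\<exists>c. c^2 = x * y"
    then obtain c where "c^2 = x * y" by blast
    hence "(c / a)^2 = y" using a assms(2) by (auto simp: power_divide)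
    thus "\<exists>b. b^2 = y" by blast
  next
    assume "\<exists>b. b^2 = y"
    then obtain b where "b^2 = y" by blast
    hence "(a * b)^2 = x * y" using a by (simp add: power_mult_distrib)
    thus "\<exists>c. c^2 = x * y" by blast
  qed
  thus ?thesis using True by blast
next
  case False
  have "(\<exists>c. c^2 = x * y) \<longleftrightarrow> \<not>(\<exists>b. b^2 = y)"
  proof
    assume "\<exists>c. c^2 = x * y"
    then obtain c where c: "c^2 = x * y" by blast
    show "\<not>(\<exists>b. b^2 = y)"
    proof
      assume "\<exists>b. b^2 = y"
      then obtain b where "b^2 = y" by blast
      hence "(c / b)^2 = x" using c assms(3) by (auto simp: power_divide)
      thus False using False by blast
    qed
  qed (rule nonsquare_mult_nonsquare[OF assms(1,2) False assms(3)])
  thus ?thesis using False by blast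
qed

lemma quad_char_mult:
  fixes x y :: "'a::{field,finite}"
  assumes "odd CHAR('a)"
  shows "quad_char (x * y) = quad_char x * quad_char y"
proof (cases "x = 0 \<or> y = 0")
  case False
  thus ?thesis using square_mult_iff[OF assms, of x y] by (auto simp: quad_char_def)
qed (auto simp: quad_char_def)

lemma mult_char_quad_char:
  "odd CHAR('a) \<Longrightarrow> mult_char (quad_char :: 'a::{field,finite} \<Rightarrow> complex)"
proof -
  assume "odd CHAR('a)"
  moreover have "quad_char (1::'a) = 1" "quad_char (0::'a) = 0"
    unfolding quad_char_def by (metis one_neq_zero power_one) simp
  ultimately show ?thesis unfolding mult_char_def using quad_char_mult by blast
qed

lemma quad_char_power2: "x \<noteq> 0 \<Longrightarrow> quad_char (x^2) = 1"
  by (auto simp: quad_char_def)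

lemma quad_char_four: "odd CHAR('a::{field,finite}) \<Longrightarrow> quad_char (4::'a) = 1"
  using quad_char_power2[OF two_neq_zero, where 'a='a] by simp

lemma cnj_quad_char [simp]: "cnj (quad_char x) = quad_char x"
  by (simp add: quad_char_def)

lemma quad_char_square: "x \<noteq> 0 \<Longrightarrow> quad_char x * quad_char x = 1"
  by (auto simp: quad_char_def)

lemma quad_char_eq_of_square:
  fixes a b :: "'a::{field,finite}"
  assumes "odd CHAR('a)" "z^2 = a * b" "z \<noteq> 0" "a \<noteq> 0"
  shows "quad_char b = quad_char a"
proof -
  have "quad_char a * quad_char b = 1"
    using assms quad_char_power2[of z] quad_char_mult[OF assms(1), of a b] by simp
  hence "(quad_char a * quad_char a) * quad_char b = quad_char a" by (metis mult.assoc mult.right_neutral)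
  thus ?thesis using quad_char_square[OF assms(4)] by simp
qed

lemma exists_nonsquare:
  assumes "odd CHAR('a)" obtains n :: "'a::{field,finite}" where "n \<noteq> 0" "\<not>(\<exists>y. y^2 = n)"
proof -
  have "(1::'a) \<in> {w. w \<noteq> 0 \<and> (\<exists>y. y^2 = w)}" by (auto intro: exI[of _ 1])
  hence "card {w::'a. w \<noteq> 0 \<and> (\<exists>y. y^2 = w)} \<noteq> 0" by (metis card_0_eq empty_iff finite)
  hence "{w::'a. w \<noteq> 0 \<and> \<not>(\<exists>y. y^2 = w)} \<noteq> {}"
    using card_squares_eq_card_nonsquares[OF assms] by auto
  thus ?thesis using that by blast
qed

lemma quad_char_neq_triv:
  assumes "odd CHAR('a::{field,finite})" shows "(quad_char :: 'a \<Rightarrow> complex) \<noteq> triv_char"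
proof
  assume h: "(quad_char :: 'a \<Rightarrow> complex) = triv_char"
  obtain n :: 'a where "n \<noteq> 0" "\<not>(\<exists>y. y^2 = n)" using exists_nonsquare[OF assms] .
  thus False using fun_cong[OF h, of n] by (simp add: quad_char_def triv_char_def)
qed

lemma sum_quad_char_times:
  fixes g :: "'a::{field,finite} \<Rightarrow> complex"
  assumes "odd CHAR('a)"
  shows "(\<Sum>w\<in>UNIV. quad_char w * g w) = (\<Sum>r\<in>UNIV. g (r^2)) - (\<Sum>w\<in>UNIV. g w)"
proof -
  have "(\<Sum>r\<in>UNIV. g (r^2)) = (\<Sum>w\<in>UNIV. of_nat (card {r. r^2 = w}) * g w)"
    using sum.group[of UNIV UNIV "\<lambda>r. r^2" "\<lambda>r. g (r^2)"] by simp
  also have "\<dots> = (\<Sum>w\<in>UNIV. g w) + (\<Sum>w\<in>UNIV. quad_char w * g w)"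
    by (simp add: card_sqrt[OF assms] distrib_right sum.distrib)
  finally show ?thesis by simp
qed

lemma square_char_neq_triv:
  fixes D :: "'a::{field,finite} \<Rightarrow> complex"
  assumes odd: "odd CHAR('a)" and D: "mult_char D" "D \<noteq> triv_char" "D \<noteq> quad_char"
  shows "(\<lambda>z. D z * D z) \<noteq> triv_char"
proof
  assume h: "(\<lambda>z. D z * D z) = triv_char"
  have sq1: "D z * D z = 1" if "z \<noteq> 0" for z using fun_cong[OF h, of z] that by (simp add: triv_char_def)
  have on_squares: "D z = 1" if z: "z \<noteq> 0" "\<exists>y. y^2 = z" for z
  proof -
    obtain y where "y^2 = z" using z(2) by blast
    hence "D z = D y * D y" by (auto simp: power2_eq_square mult_char_mult[OF D(1)])
    thus ?thesis using sq1 \<open>y^2 = z\<close> z(1) by fastforce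
  qed
  obtain n where n: "n \<noteq> 0" "D n \<noteq> 1" using mult_char_neq_triv_witness[OF D(1,2)] .
  have "(D n - 1) * (D n + 1) = 0" using sq1[OF n(1)] by (simp add: algebra_simps)
  hence Dn: "D n = -1" using n(2) by (simp add: add_eq_0_iff2)
  have n_nonsq: "\<not> (\<exists>y. y^2 = n)" using on_squares[OF n(1)] Dn by auto
  have "quad_char = D"
  proof (rule mult_char_eqI[OF mult_char_quad_char[OF odd] D(1)])
    fix z :: 'a assume z: "z \<noteq> 0"
    show "quad_char z = D z"
    proof (cases "\<exists>y. y^2 = z")
      case False
      hence "D (z * n) = 1" using on_squares square_mult_iff[OF odd z n(1)] n_nonsq z n(1) by simp
      hence "D z = -1" using Dn by (simp add: mult_char_mult[OF D(1)] minus_equation_iff)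
      thus ?thesis using False z by (simp add: quad_char_def)
    qed (use z on_squares in \<open>simp add: quad_char_def\<close>)
  qed
  thus False using D(3) by simp
qed

lemma cnj_times_quad_char_neq_triv:
  fixes D :: "'a::{field,finite} \<Rightarrow> complex"
  assumes odd: "odd CHAR('a)" and D: "mult_char D" "D \<noteq> quad_char"
  shows "(\<lambda>z. cnj (D z) * quad_char z) \<noteq> triv_char"
  using times_cnj_neq_triv[OF mult_char_quad_char[OF odd] D(1)] D(2)
  by (simp add: mult.commute)

section \<open>Jacobi sums\<close>

lemma jacobi_commute: "jacobi A B = jacobi B A"
  unfolding jacobi_def using sum_reindex_reflect[of "\<lambda>x. A x * B (1 - x)" 1] by (simp add: mult.commute)

lemma sum_triv_char: "(\<Sum>x\<in>UNIV. triv_char (x::'a::{field,finite})) = of_nat (card (UNIV::'a set)) - 1"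
  using sum_triv_char_times[of "\<lambda>_. 1"] by (simp add: triv_char_def)

lemma jacobi_triv_left:
  assumes "mult_char B" "B \<noteq> triv_char" shows "jacobi triv_char B = -1"
proof -
  have "jacobi triv_char B = (\<Sum>x\<in>UNIV. triv_char x * B (1 - x))" by (simp add: jacobi_def)
  also have "\<dots> = (\<Sum>x\<in>UNIV. B (1 - x)) - B 1" using sum_triv_char_times[of "\<lambda>x. B (1 - x)"] by simp
  also have "(\<Sum>x\<in>UNIV. B (1 - x)) = 0"
    using sum_reindex_reflect[of B 1] sum_mult_char[OF assms] by simp
  finally show ?thesis using mult_char_one[OF assms(1)] by simp
qed

lemma sum_mult_char_linear:
  fixes A B :: "'a::{field,finite} \<Rightarrow> complex"
  assumes A: "mult_char A" and B: "mult_char B" and AB: "(\<lambda>x. A x * B x) \<noteq> triv_char" and b0: "b \<noteq> 0"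
  shows "(\<Sum>m\<in>UNIV. A m * B (a - b * m)) = A a * cnj (A b) * B a * jacobi A B"
proof (cases "a = 0")
  case True
  have "(\<Sum>m\<in>UNIV. A m * B (a - b * m)) = B (- b) * (\<Sum>m\<in>UNIV. A m * B m)"
    unfolding sum_distrib_left using True by (intro sum.cong refl) (simp add: mult_char_mult[OF B, symmetric])
  thus ?thesis using True sum_mult_char[OF mult_char_times[OF A B] AB] mult_char_zero[OF A] by simp
next
  case False
  have "(\<Sum>m\<in>UNIV. A m * B (a - b * m)) = (\<Sum>z\<in>UNIV. A (a / b * z) * B (a * (1 - z)))"
    using sum_reindex_scale[of "a / b" "\<lambda>m. A m * B (a - b * m)"] False b0 by (simp add: algebra_simps)
  also have "\<dots> = A a * cnj (A b) * B a * jacobi A B"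
    by (simp add: jacobi_def sum_distrib_left mult_char_mult[OF A] mult_char_mult[OF B] mult_char_divide[OF A] ac_simps)
  finally show ?thesis .
qed

text \<open>Both sides equal the double sum of \<open>A x B y E (1 - x - y)\<close>.\<close>

lemma jacobi_assoc:
  fixes A B E :: "'a::{field,finite} \<Rightarrow> complex"
  assumes "mult_char A" "mult_char B" "mult_char E"
    and "(\<lambda>x. A x * B x) \<noteq> triv_char" "(\<lambda>x. B x * E x) \<noteq> triv_char"
  shows "jacobi A B * jacobi (\<lambda>x. A x * B x) E = jacobi A (\<lambda>x. B x * E x) * jacobi B E"
proof -
  let ?T = "\<Sum>x\<in>UNIV. \<Sum>y\<in>UNIV. A x * B y * E (1 - x - y)"
  have inner_AB: "(\<Sum>x\<in>UNIV. A x * B (s - x)) = A s * B s * jacobi A B" for s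
    using sum_mult_char_linear[OF assms(1,2,4) one_neq_zero, of s] mult_char_one[OF assms(1)] by simp
  have inner_BE: "(\<Sum>y\<in>UNIV. B y * E (1 - x - y)) = B (1 - x) * E (1 - x) * jacobi B E" for x
    using sum_mult_char_linear[OF assms(2,3,5) one_neq_zero, of "1 - x"] mult_char_one[OF assms(2)] by simp
  have "?T = (\<Sum>x\<in>UNIV. \<Sum>s\<in>UNIV. A x * B (s - x) * E (1 - s))"
  proof (rule sum.cong[OF refl])
    fix x show "(\<Sum>y\<in>UNIV. A x * B y * E (1 - x - y)) = (\<Sum>s\<in>UNIV. A x * B (s - x) * E (1 - s))"
      using sum_reindex_shift[of "\<lambda>y. A x * B y * E (1 - x - y)" "- x"] by (simp add: algebra_simps)
  qed
  also have "\<dots> = (\<Sum>s\<in>UNIV. E (1 - s) * (\<Sum>x\<in>UNIV. A x * B (s - x)))"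
    by (subst sum.swap) (simp add: sum_distrib_left algebra_simps)
  also have "\<dots> = jacobi A B * jacobi (\<lambda>x. A x * B x) E"
    unfolding inner_AB by (simp add: jacobi_def sum_distrib_left algebra_simps)
  finally have "?T = jacobi A B * jacobi (\<lambda>x. A x * B x) E" .
  moreover have "?T = (\<Sum>x\<in>UNIV. A x * (\<Sum>y\<in>UNIV. B y * E (1 - x - y)))"
    by (simp add: sum_distrib_left algebra_simps)
  moreover have "\<dots> = jacobi A (\<lambda>x. B x * E x) * jacobi B E"
    unfolding inner_BE by (simp add: jacobi_def sum_distrib_right mult.assoc)
  ultimately show ?thesis by simp
qed

text \<open>Duplication formula: substitute \<open>x = (1 + s) / 2\<close> in \<open>J(E,E)\<close>, so that \<open>x (1 - x) = (1 - s^2) / 4\<close>.\<close>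

lemma jacobi_quad_char:
  fixes E :: "'a::{field,finite} \<Rightarrow> complex"
  assumes odd: "odd CHAR('a)" and "mult_char E" "E \<noteq> triv_char"
  shows "jacobi quad_char E = E 4 * jacobi E E"
proof -
  have two: "(2::'a) \<noteq> 0" and four: "(4::'a) \<noteq> 0"
    using two_neq_zero[OF odd] four_neq_zero[OF odd] .
  have "jacobi E E = (\<Sum>x\<in>UNIV. E ((1 - (2*x - 1)^2) / 4))"
    unfolding jacobi_def mult_char_mult[OF assms(2), symmetric]
    by (intro sum.cong refl arg_cong[where f=E]) (use four in \<open>simp add: field_simps power2_eq_square\<close>)
  also have "\<dots> = (\<Sum>s\<in>UNIV. E ((1 - s^2) / 4))"
    using sum_reindex_affine[OF two, of "\<lambda>s. E ((1 - s^2) / 4)" "-1"] by simp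
  also have "\<dots> = cnj (E 4) * (\<Sum>s\<in>UNIV. E (1 - s^2))"
    by (simp add: mult_char_divide[OF assms(2)] sum_distrib_left mult.commute)
  also have "(\<Sum>s\<in>UNIV. E (1 - s^2)) = (\<Sum>w\<in>UNIV. quad_char w * E (1 - w)) + (\<Sum>w\<in>UNIV. E (1 - w))"
    using sum_quad_char_times[OF odd, of "\<lambda>w. E (1 - w)"] by simp
  also have "(\<Sum>w\<in>UNIV. E (1 - w)) = 0"
    using sum_reindex_reflect[of E 1] sum_mult_char[OF assms(2,3)] by simp
  finally have "jacobi E E = cnj (E 4) * jacobi quad_char E" by (simp add: jacobi_def)
  thus ?thesis using cnj_mult_char_mult[OF assms(2) four] by (metis mult.assoc mult.commute mult_1)
qed

text \<open>Substitution \<open>x \<mapsto> x / (x - 1)\<close>, an involution of the field minus \<open>1\<close>.\<close>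

lemma jacobi_reflect:
  fixes A B :: "'a::{field,finite} \<Rightarrow> complex"
  assumes "mult_char A" "mult_char B"
  shows "jacobi A B = A (-1) * jacobi A (\<lambda>x. cnj (A x * B x))"
proof -
  let ?U = "UNIV - {1::'a}"
  let ?f = "\<lambda>y::'a. y / (y - 1)"
  have "bij_betw ?f ?U ?U"
    by (rule bij_betw_byWitness[where f'="?f"]) (auto simp: field_simps)
  have "jacobi A B = (\<Sum>x\<in>?U. A x * B (1 - x))"
    unfolding jacobi_def using sum.remove[of UNIV 1 "\<lambda>x. A x * B (1 - x)"] mult_char_zero[OF assms(2)] by simp
  also have "\<dots> = (\<Sum>y\<in>?U. A (?f y) * B (1 - ?f y))"
    using sum.reindex_bij_betw[OF \<open>bij_betw ?f ?U ?U\<close>, of "\<lambda>x. A x * B (1 - x)"] by simp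
  also have "\<dots> = (\<Sum>y\<in>?U. A (-1) * (A y * cnj (A (1 - y) * B (1 - y))))"
  proof (rule sum.cong[OF refl])
    fix y assume "y \<in> ?U"
    hence "1 - y \<noteq> 0" by auto
    hence "1 - ?f y = inverse (1 - y)" by (simp add: field_simps)
    moreover have "A (?f y) = A y * cnj (A (-1)) * cnj (A (1 - y))"
      using mult_char_mult[OF assms(1), of "-1" "1 - y"]
      by (simp add: divide_inverse mult_char_mult[OF assms(1)] mult_char_inverse[OF assms(1)])
    ultimately show "A (?f y) * B (1 - ?f y) = A (-1) * (A y * cnj (A (1 - y) * B (1 - y)))"
      by (simp add: mult_char_inverse[OF assms(2)] cnj_mult_char_neg_one[OF assms(1)])
  qed
  also have "\<dots> = A (-1) * (\<Sum>y\<in>UNIV. A y * cnj (A (1 - y) * B (1 - y)))"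
    using sum.remove[of UNIV 1 "\<lambda>y. A y * cnj (A (1 - y) * B (1 - y))"] mult_char_zero[OF assms(1)]
    by (simp add: sum_distrib_left)
  finally show ?thesis by (simp add: jacobi_def)
qed

text \<open>Substitution \<open>y = 1 - 1/s\<close>.\<close>

lemma sum_mult_char_ratio:
  fixes B :: "'a::{field,finite} \<Rightarrow> complex"
  assumes "mult_char B"
  shows "(\<Sum>y\<in>UNIV. B (1 - t * y) * cnj (B (1 - y))) = (\<Sum>s\<in>UNIV. B ((1 - t) * s + t)) - B t"
proof -
  let ?f = "\<lambda>y. B (1 - t * y) * cnj (B (1 - y))"
  have "(\<Sum>y\<in>UNIV. ?f y) = (\<Sum>s\<in>UNIV. ?f (1 - 1 * inverse s))"
    using sum_reindex_inverse[of 1 "\<lambda>u. ?f (1 - u)"] sum_reindex_reflect[of ?f 1] by simp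
  also have "\<dots> = (\<Sum>s\<in>UNIV. B ((1 - t) * s + t) - (if s = 0 then B t else 0))"
  proof (rule sum.cong[OF refl])
    fix s :: 'a
    show "?f (1 - 1 * inverse s) = B ((1 - t) * s + t) - (if s = 0 then B t else 0)"
    proof (cases "s = 0")
      case False
      hence "(1 - t) * s + t = (1 - t * (1 - 1 * inverse s)) * s" by (simp add: field_simps)
      thus ?thesis using False
        by (simp add: mult_char_mult[OF assms] mult_char_inverse[OF assms])
    qed (simp add: mult_char_zero[OF assms])
  qed
  also have "\<dots> = (\<Sum>s\<in>UNIV. B ((1 - t) * s + t)) - B t" by (simp add: sum_subtractf)
  finally show ?thesis .
qed

lemma jacobi_times_cnj:
  fixes A B :: "'a::{field,finite} \<Rightarrow> complex"
  assumes A: "mult_char A" "A \<noteq> triv_char" and B: "mult_char B" "B \<noteq> triv_char"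
  shows "jacobi A B * cnj (jacobi A B) = of_nat (card (UNIV::'a set)) - (\<Sum>t\<in>UNIV. A t * B t)"
proof -
  let ?q = "of_nat (card (UNIV::'a set)) :: complex"
  have inner: "(\<Sum>s\<in>UNIV. B ((1 - t) * s + t)) = (if t = 1 then ?q else 0)" for t
    using sum_reindex_affine[of "1 - t" B t] sum_mult_char[OF B] mult_char_one[OF B(1)] by auto
  have rescale: "cnj (A y) * (\<Sum>x\<in>UNIV. A x * B (1 - x))
      = (\<Sum>t\<in>UNIV. triv_char y * A t * B (1 - t * y))" for y
  proof (cases "y = 0")
    case False
    have "cnj (A y) * (\<Sum>x\<in>UNIV. A x * B (1 - x)) = cnj (A y) * (\<Sum>t\<in>UNIV. A (y * t) * B (1 - y * t))"
      using sum_reindex_scale[OF False, of "\<lambda>x. A x * B (1 - x)"] by simp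
    also have "\<dots> = (\<Sum>t\<in>UNIV. (cnj (A y) * A y) * A t * B (1 - t * y))"
      by (simp add: sum_distrib_left mult_char_mult[OF A(1)] ac_simps)
    finally show ?thesis using cnj_mult_char_mult[OF A(1) False] False by (simp add: triv_char_def)
  qed (simp add: mult_char_zero[OF A(1)] triv_char_def)
  have "jacobi A B * cnj (jacobi A B)
      = (\<Sum>y\<in>UNIV. cnj (B (1 - y)) * (cnj (A y) * (\<Sum>x\<in>UNIV. A x * B (1 - x))))"
    by (simp add: jacobi_def sum_distrib_left sum_distrib_right ac_simps)
  also have "\<dots> = (\<Sum>y\<in>UNIV. \<Sum>t\<in>UNIV. cnj (B (1 - y)) * (triv_char y * A t * B (1 - t * y)))"
    unfolding rescale by (simp only: sum_distrib_left)
  also have "\<dots> = (\<Sum>t\<in>UNIV. A t * (\<Sum>y\<in>UNIV. triv_char y * (B (1 - t * y) * cnj (B (1 - y)))))"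
    by (subst sum.swap) (simp add: sum_distrib_left ac_simps)
  also have "\<dots> = (\<Sum>t\<in>UNIV. A t * ((if t = 1 then ?q else 0) - B t - 1))"
    by (simp add: sum_triv_char_times sum_mult_char_ratio[OF B(1)] inner mult_char_one[OF B(1)])
  also have "\<dots> = A 1 * ?q - (\<Sum>t\<in>UNIV. A t * B t) - (\<Sum>t\<in>UNIV. A t)"
  proof -
    have "(\<Sum>t\<in>UNIV. A t * ((if t = 1 then ?q else 0) - B t - 1))
        = (\<Sum>t\<in>UNIV. (if t = 1 then A 1 * ?q else 0) - A t * B t - A t)"
      by (rule sum.cong) (auto simp: algebra_simps)
    thus ?thesis by (simp add: sum_subtractf)
  qed
  finally show ?thesis using sum_mult_char[OF A] mult_char_one[OF A(1)] by simp
qed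

lemma jacobi_nonzero:
  fixes A B :: "'a::{field,finite} \<Rightarrow> complex"
  assumes "mult_char A" "mult_char B" "A \<noteq> triv_char \<or> B \<noteq> triv_char"
  shows "jacobi A B \<noteq> 0"
proof -
  have nonzero: "jacobi A B \<noteq> 0" if A: "mult_char A" "A \<noteq> triv_char" and B: "mult_char B" for A B :: "'a \<Rightarrow> complex"
  proof (cases "B = triv_char")
    case True
    thus ?thesis using jacobi_triv_left[OF A] jacobi_commute[of A B] by simp
  next
    case False
    have "card {0::'a, 1} \<le> card (UNIV::'a set)" by (rule card_mono) auto
    hence "(of_nat (card (UNIV::'a set)) :: complex) \<noteq> 0" by auto
    moreover have "(\<Sum>t\<in>UNIV. A t * B t) = 0 \<or> (\<Sum>t\<in>UNIV. A t * B t) = of_nat (card (UNIV::'a set)) - 1"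
    proof (cases "(\<lambda>t. A t * B t) = triv_char")
      case True
      have "(\<Sum>t\<in>UNIV. A t * B t) = (\<Sum>t\<in>UNIV. triv_char (t::'a))" by (simp only: True)
      thus ?thesis by (simp add: sum_triv_char)
    qed (use sum_mult_char[OF mult_char_times[OF A(1) B]] in auto)
    ultimately show ?thesis using jacobi_times_cnj[OF A B False] by auto
  qed
  show ?thesis using assms nonzero jacobi_commute by metis
qed

lemma jacobi_quad_char_cnj:
  assumes odd: "odd CHAR('a::{field,finite})" and D: "mult_char (D::'a \<Rightarrow> complex)"
  shows "jacobi quad_char (\<lambda>x. cnj (D x) * quad_char x) = quad_char (-1::'a) * jacobi quad_char D"
proof -
  have "(\<lambda>x. cnj (quad_char x * (cnj (D x) * quad_char x))) = D"
  proof
    fix x :: 'a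
    show "cnj (quad_char x * (cnj (D x) * quad_char x)) = D x"
      using quad_char_square[of x] mult_char_zero[OF D] by (cases "x = 0") (simp_all add: ac_simps)
  qed
  thus ?thesis
    using jacobi_reflect[OF mult_char_quad_char[OF odd] mult_char_times[OF mult_char_cnj[OF D] mult_char_quad_char[OF odd]]]
    by simp
qed

text \<open>By reflection, duplication and \<open>J(\<phi>, D\<^sup>*\<phi>) = \<phi>(-1) J(\<phi>, D)\<close>.\<close>

lemma jacobi_square_cnj_quad_char:
  fixes D :: "'a::{field,finite} \<Rightarrow> complex"
  assumes odd: "odd CHAR('a)" and D: "mult_char D" "D \<noteq> triv_char" "D \<noteq> quad_char"
  shows "jacobi (\<lambda>z. D z * D z) (\<lambda>z. cnj (D z) * quad_char z) = D (-1) * D 4 * D 4 * jacobi D D"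
proof -
  define E where "E = (\<lambda>z. cnj (D z) * quad_char z)"
  have E: "mult_char E" "E \<noteq> triv_char"
    unfolding E_def using mult_char_times[OF mult_char_cnj[OF D(1)] mult_char_quad_char[OF odd]]
      cnj_times_quad_char_neq_triv[OF odd D(1,3)] by auto
  have "(\<lambda>z. cnj (E z * (D z * D z))) = E"
  proof
    fix z show "cnj (E z * (D z * D z)) = E z"
      using cnj_mult_char_mult[OF D(1), of z] mult_char_zero[OF D(1)]
      by (cases "z = 0") (simp_all add: E_def ac_simps)
  qed
  hence "jacobi (\<lambda>z. D z * D z) E = E (-1) * jacobi E E"
    using jacobi_commute jacobi_reflect[OF E(1) mult_char_times[OF D(1) D(1)]] by metis
  also have "E 4 * jacobi E E = quad_char (-1::'a) * (D 4 * jacobi D D)"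
    using jacobi_quad_char[OF odd E] jacobi_quad_char_cnj[OF odd D(1)] jacobi_quad_char[OF odd D(1,2)]
    unfolding E_def by simp
  hence "jacobi E E = quad_char (-1::'a) * D 4 * D 4 * jacobi D D"
    using cnj_mult_char_mult[OF D(1) four_neq_zero[OF odd]] quad_char_four[OF odd]
    by (simp add: E_def) (metis (no_types, lifting) mult.assoc mult.left_commute mult_1)
  finally show ?thesis
    using cnj_mult_char_neg_one[OF D(1)] mult_char_neg_one_square[OF mult_char_quad_char[OF odd]]
    by (simp add: E_def ac_simps)
qed

lemma jacobi_square_cnj_nonzero:
  fixes B D :: "'a::{field,finite} \<Rightarrow> complex"
  assumes odd: "odd CHAR('a)" and D: "mult_char D" "D \<noteq> quad_char" and B: "mult_char B" "B \<noteq> D"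
  shows "jacobi (\<lambda>z. D z * D z) (\<lambda>z. cnj (B z)) \<noteq> 0"
proof (cases "B = triv_char")
  case True
  hence "(\<lambda>z. D z * D z) \<noteq> triv_char" using square_char_neq_triv[OF odd D(1) _ D(2)] B(2) by blast
  thus ?thesis using jacobi_nonzero[OF mult_char_times[OF D(1) D(1)] mult_char_cnj[OF B(1)]] by blast
qed (use jacobi_nonzero[OF mult_char_times[OF D(1) D(1)] mult_char_cnj[OF B(1)]] cnj_char_neq_triv in blast)

section \<open>Character sums twisted by the quadratic character\<close>

lemma sum_quad_char_shift:
  fixes D :: "'a::{field,finite} \<Rightarrow> complex"
  assumes odd: "odd CHAR('a)" and D: "mult_char D" "D \<noteq> triv_char"
  shows "(\<Sum>\<eta>\<in>UNIV. quad_char \<eta> * (cnj (D (\<eta> + k)) * quad_char (\<eta> + k))) = cnj (D k) * jacobi quad_char D"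
proof (cases "k = 0")
  case True
  have "(\<Sum>\<eta>\<in>UNIV. quad_char \<eta> * (cnj (D (\<eta> + k)) * quad_char (\<eta> + k))) = (\<Sum>\<eta>\<in>UNIV. cnj (D \<eta>))"
  proof (rule sum.cong[OF refl])
    fix \<eta> :: 'a
    show "quad_char \<eta> * (cnj (D (\<eta> + k)) * quad_char (\<eta> + k)) = cnj (D \<eta>)"
      using True quad_char_square[of \<eta>] mult_char_zero[OF D(1)] by (cases "\<eta> = 0") (simp_all add: ac_simps)
  qed
  also have "\<dots> = 0" by (rule sum_mult_char[OF mult_char_cnj[OF D(1)] cnj_char_neq_triv[OF D(2)]])
  finally show ?thesis using True mult_char_zero[OF D(1)] by simp
next
  case False
  have "(\<Sum>\<eta>\<in>UNIV. quad_char \<eta> * (cnj (D (\<eta> + k)) * quad_char (\<eta> + k)))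
      = (\<Sum>z\<in>UNIV. quad_char (- k * z) * (cnj (D (k * (1 - z))) * quad_char (k * (1 - z))))"
    using sum_reindex_scale[of "- k" "\<lambda>\<eta>. quad_char \<eta> * (cnj (D (\<eta> + k)) * quad_char (\<eta> + k))"] False
    by (simp add: algebra_simps)
  also have "\<dots> = (\<Sum>z\<in>UNIV. quad_char (-1::'a) * cnj (D k) * (quad_char k * quad_char k)
                        * (quad_char z * (cnj (D (1 - z)) * quad_char (1 - z))))"
  proof -
    have "quad_char (- k * z) = quad_char (-1::'a) * quad_char k * quad_char z" for z
      using quad_char_mult[OF odd, of "-1" k] quad_char_mult[OF odd, of "-k" z] by simp
    thus ?thesis by (simp add: quad_char_mult[OF odd] mult_char_mult[OF D(1)] ac_simps)
  qed
  also have "\<dots> = quad_char (-1::'a) * cnj (D k) * jacobi quad_char (\<lambda>x. cnj (D x) * quad_char x)"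
    using quad_char_square[OF False] by (simp add: jacobi_def sum_distrib_left)
  also have "\<dots> = cnj (D k) * jacobi quad_char D"
    unfolding jacobi_quad_char_cnj[OF odd D(1)]
    using mult_char_neg_one_square[OF mult_char_quad_char[OF odd]] by (simp add: ac_simps)
  finally show ?thesis .
qed

lemma square_cases:
  fixes w :: "'a::field"
  obtains "w = 0" | "w \<noteq> 0" "\<not> (\<exists>d. d^2 = w)" | d where "d \<noteq> 0" "d^2 = w"
  by (cases "w = 0") (auto, metis power_zero_numeral)

lemma quadratic_roots:
  fixes \<eta> c d :: "'a::{field,finite}"
  assumes odd: "odd CHAR('a)" and disc: "\<eta>^2 - 4*c = d^2"
  shows "{s. s^2 - \<eta>*s + c = 0} = {(\<eta> + d)/2, (\<eta> - d)/2}"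
proof -
  have two: "(2::'a) \<noteq> 0" by (rule two_neq_zero[OF odd])
  have "s^2 - \<eta>*s + c = 0 \<longleftrightarrow> (2*s - \<eta>)^2 = d^2" for s
  proof -
    have "(2*s - \<eta>)^2 = 4 * (s^2 - \<eta>*s + c) + d^2"
      using disc by (simp add: power2_eq_square algebra_simps)
    thus ?thesis using four_neq_zero[OF odd] by (metis add_cancel_right_left mult_eq_0_iff)
  qed
  also have "(2*s - \<eta>)^2 = d^2 \<longleftrightarrow> s = (\<eta> + d)/2 \<or> s = (\<eta> - d)/2" for s
    using two by (auto simp: power2_eq_iff field_simps)
  finally show ?thesis by auto
qed

lemma half_sum_neq_half_diff:
  fixes \<eta> d :: "'a::{field,finite}"
  assumes odd: "odd CHAR('a)" and "d \<noteq> 0" shows "(\<eta> + d)/2 \<noteq> (\<eta> - d)/2"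
proof
  assume "(\<eta> + d)/2 = (\<eta> - d)/2"
  hence "\<eta> + d = \<eta> - d" using two_neq_zero[OF odd] by (metis divide_cancel_right)
  hence "d = - d" by (simp only: diff_conv_add_uminus add_left_cancel)
  thus False using neg_neq_self[OF odd assms(2)] by blast
qed

lemma quad_char_root:
  fixes s \<rho> \<eta> :: "'a::{field,finite}"
  assumes odd: "odd CHAR('a)" and "s^2 - \<eta>*s + \<rho>^2 = 0" "\<rho> \<noteq> 0" "\<eta> - 2*\<rho> \<noteq> 0"
  shows "quad_char s = quad_char (\<eta> - 2*\<rho>)"
proof -
  have "(s - \<rho>)^2 = s * (\<eta> - 2*\<rho>)" using assms(2) by (simp add: power2_eq_square algebra_simps)
  moreover have "s \<noteq> 0" using assms(2,3) by auto
  moreover have "s - \<rho> \<noteq> 0" using calculation assms(4) by auto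
  ultimately show ?thesis using quad_char_eq_of_square[OF odd] by metis
qed

lemma quad_char_add_eq_zero:
  fixes a b :: "'a::{field,finite}"
  assumes odd: "odd CHAR('a)" and "a * b \<noteq> 0" "\<not> (\<exists>d. d^2 = a * b)"
  shows "quad_char a + quad_char b = 0"
proof -
  have "quad_char (a * b) = -1"
    unfolding quad_char_def by (simp only: if_not_P[OF assms(2)] if_not_P[OF assms(3)])
  hence prod: "quad_char a * quad_char b = -1" by (simp add: quad_char_mult[OF odd])
  have "quad_char b = (quad_char a * quad_char a) * quad_char b"
    using assms(2) by (simp add: quad_char_square)
  also have "\<dots> = - quad_char a" by (simp only: mult.assoc prod) simp
  finally show ?thesis by simp
qed

lemma sum_quad_char_roots:
  fixes \<rho> \<eta> :: "'a::{field,finite}"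
  assumes odd: "odd CHAR('a)" and r0: "\<rho> \<noteq> 0"
  shows "(\<Sum>s\<in>{s. s^2 - \<eta>*s + \<rho>^2 = 0}. quad_char s) = quad_char (\<eta> - 2*\<rho>) + quad_char (\<eta> + 2*\<rho>)"
proof -
  let ?R = "{s. s^2 - \<eta>*s + \<rho>^2 = 0}"
  have two: "(2::'a) \<noteq> 0" by (rule two_neq_zero[OF odd])
  have disc: "\<eta>^2 - 4*\<rho>^2 = (\<eta> - 2*\<rho>) * (\<eta> + 2*\<rho>)" by (simp add: power2_eq_square algebra_simps)
  consider "(\<eta> - 2*\<rho>) * (\<eta> + 2*\<rho>) = 0"
    | "(\<eta> - 2*\<rho>) * (\<eta> + 2*\<rho>) \<noteq> 0" "\<not> (\<exists>d. d^2 = (\<eta> - 2*\<rho>) * (\<eta> + 2*\<rho>))"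
    | d where "d \<noteq> 0" "d^2 = (\<eta> - 2*\<rho>) * (\<eta> + 2*\<rho>)"
    using square_cases by metis
  thus ?thesis
  proof cases
    case 1
    hence "?R = {\<eta> / 2}" using quadratic_roots[OF odd, of \<eta> "\<rho>^2" 0] disc by simp
    moreover have "quad_char (\<eta> - 2*\<rho>) + quad_char (\<eta> + 2*\<rho>) = quad_char (\<eta> - 2*\<rho> + (\<eta> + 2*\<rho>))"
      using 1 by (auto simp: quad_char_def[of 0] add_eq_0_iff2)
    moreover have "\<eta> - 2*\<rho> + (\<eta> + 2*\<rho>) = 4 * (\<eta> / 2)" using two by (simp add: field_simps)
    ultimately show ?thesis using quad_char_mult[OF odd, of 4 "\<eta> / 2"] quad_char_four[OF odd] by simp
  next
    case 2
    have "(2*s - \<eta>)^2 = (\<eta> - 2*\<rho>) * (\<eta> + 2*\<rho>)" if "s \<in> ?R" for s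
    proof -
      have "(2*s - \<eta>)^2 = 4 * (s^2 - \<eta>*s + \<rho>^2) + (\<eta> - 2*\<rho>) * (\<eta> + 2*\<rho>)"
        by (simp add: power2_eq_square algebra_simps)
      thus ?thesis using that by (simp only: mem_Collect_eq mult_zero_right add_0)
    qed
    hence "?R = {}" using 2(2) by blast
    thus ?thesis using quad_char_add_eq_zero[OF odd 2] by simp
  next
    case 3
    hence R: "?R = {(\<eta> + d)/2, (\<eta> - d)/2}" using quadratic_roots[OF odd, of \<eta> "\<rho>^2" d] disc by simp
    have "(\<eta> + d)/2 \<noteq> (\<eta> - d)/2" by (rule half_sum_neq_half_diff[OF odd 3(1)])
    moreover have a0: "\<eta> - 2*\<rho> \<noteq> 0" using 3 by auto
    moreover have "quad_char (\<eta> + 2*\<rho>) = quad_char (\<eta> - 2*\<rho>)"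
      by (rule quad_char_eq_of_square[OF odd 3(2) 3(1) a0])
    moreover have "quad_char ((\<eta> + d)/2) = quad_char (\<eta> - 2*\<rho>)" "quad_char ((\<eta> - d)/2) = quad_char (\<eta> - 2*\<rho>)"
      using R quad_char_root[OF odd _ r0 a0] by blast+
    ultimately show ?thesis unfolding R by simp
  qed
qed

text \<open>Grouping by the value of \<open>s + \<rho>^2/s\<close>: the fibre over \<open>\<eta>\<close> is the root set of
\<open>s^2 - \<eta> s + \<rho>^2\<close>.\<close>

lemma sum_quad_char_fibres:
  fixes \<rho> :: "'a::{field,finite}" and f :: "'a \<Rightarrow> complex"
  assumes odd: "odd CHAR('a)" and r0: "\<rho> \<noteq> 0"
  shows "(\<Sum>s\<in>UNIV. quad_char s * f (s + \<rho>^2/s))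
       = (\<Sum>\<eta>\<in>UNIV. (quad_char (\<eta> - 2*\<rho>) + quad_char (\<eta> + 2*\<rho>)) * f \<eta>)"
proof -
  let ?g = "\<lambda>s. s + \<rho>^2/s"
  have fibre: "{s \<in> UNIV - {0}. ?g s = \<eta>} = {s. s^2 - \<eta>*s + \<rho>^2 = 0}" for \<eta>
  proof -
    have "s \<noteq> 0 \<and> ?g s = \<eta> \<longleftrightarrow> s^2 - \<eta>*s + \<rho>^2 = 0" for s
    proof (cases "s = 0")
      case False
      hence "?g s = \<eta> \<longleftrightarrow> s * ?g s = s * \<eta>" by simp
      also have "s * ?g s = s^2 + \<rho>^2" using False by (simp add: power2_eq_square field_simps)
      finally show ?thesis using False by (auto simp: algebra_simps)
    qed (use r0 in simp)
    thus ?thesis by auto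
  qed
  have "(\<Sum>s\<in>UNIV. quad_char s * f (?g s)) = (\<Sum>s\<in>UNIV - {0}. quad_char s * f (?g s))"
    by (rule sum.mono_neutral_right) (auto simp: quad_char_def)
  also have "\<dots> = (\<Sum>\<eta>\<in>UNIV. \<Sum>s\<in>{s \<in> UNIV - {0}. ?g s = \<eta>}. quad_char s * f (?g s))"
    by (rule sum.group[symmetric]) auto
  also have "\<dots> = (\<Sum>\<eta>\<in>UNIV. (\<Sum>s\<in>{s \<in> UNIV - {0}. ?g s = \<eta>}. quad_char s) * f \<eta>)"
    unfolding sum_distrib_right by (intro sum.cong refl) auto
  also have "\<dots> = (\<Sum>\<eta>\<in>UNIV. (\<Sum>s\<in>{s. s^2 - \<eta>*s + \<rho>^2 = 0}. quad_char s) * f \<eta>)"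
    unfolding fibre ..
  finally show ?thesis by (simp add: sum_quad_char_roots[OF odd r0])
qed

lemma sum_quad_char_twisted_nonsquare:
  fixes F :: "'a::{field,finite} \<Rightarrow> complex"
  assumes odd: "odd CHAR('a)" and c0: "c \<noteq> 0" and nonsquare: "quad_char c = -1"
  shows "(\<Sum>s\<in>UNIV. quad_char s * F (s + c / s)) = 0"
proof -
  let ?S = "\<Sum>s\<in>UNIV. quad_char s * F (s + c / s)"
  have "?S = (\<Sum>s\<in>UNIV. quad_char (c * inverse s) * F (c * inverse s + c / (c * inverse s)))"
    by (rule sum_reindex_inverse[OF c0, symmetric])
  also have "\<dots> = (\<Sum>s\<in>UNIV. - (quad_char s * F (s + c / s)))"
  proof (rule sum.cong[OF refl])
    fix s :: 'a
    show "quad_char (c * inverse s) * F (c * inverse s + c / (c * inverse s)) = - (quad_char s * F (s + c / s))"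
    proof (cases "s = 0")
      case False
      hence "c * inverse s + c / (c * inverse s) = s + c / s" using c0 by (simp add: field_simps)
      moreover have "quad_char (c * inverse s) = - quad_char s"
        using quad_char_mult[OF odd, of c "inverse s"] nonsquare mult_char_inverse[OF mult_char_quad_char[OF odd], of s]
        by simp
      ultimately show ?thesis by simp
    qed (simp add: quad_char_def)
  qed
  also have "\<dots> = - ?S" by (simp add: sum_negf)
  finally show ?thesis by simp
qed

text \<open>The twist by \<open>s \<mapsto> s + c/s\<close> unfolds into one shifted sum for each square root of \<open>c\<close>;
for \<open>c = 0\<close> this relies on \<open>0/s = 0\<close> even at \<open>s = 0\<close>.\<close>

lemma sum_quad_char_twisted:
  fixes h :: "'a::{field,finite} \<Rightarrow> complex"
  assumes odd: "odd CHAR('a)"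
  shows "(\<Sum>s\<in>UNIV. quad_char s * h (s + c / s))
       = (\<Sum>\<sigma>\<in>{\<sigma>. \<sigma>^2 = c}. \<Sum>\<eta>\<in>UNIV. quad_char \<eta> * h (\<eta> + 2*\<sigma>))"
proof (cases c rule: square_cases)
  case 1
  moreover have "{\<sigma>::'a. \<sigma>^2 = 0} = {0}" by auto
  ultimately show ?thesis by simp
next
  case 2
  hence "quad_char c = -1" by (simp add: quad_char_def)
  thus ?thesis using sum_quad_char_twisted_nonsquare[OF odd 2(1)] 2(2) by simp
next
  case (3 \<rho>)
  have "{\<sigma>. \<sigma>^2 = c} = {\<rho>, - \<rho>}" using 3(2) power2_eq_iff[of _ \<rho>] by auto
  moreover have "\<rho> \<noteq> - \<rho>" using neg_neq_self[OF odd 3(1)] .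
  moreover have "(\<Sum>\<eta>\<in>UNIV. quad_char (\<eta> - 2*\<rho>) * h \<eta>) = (\<Sum>\<eta>\<in>UNIV. quad_char \<eta> * h (\<eta> + 2*\<rho>))"
    using sum_reindex_shift[of "\<lambda>\<eta>. quad_char (\<eta> - 2*\<rho>) * h \<eta>" "2*\<rho>"] by simp
  moreover have "(\<Sum>\<eta>\<in>UNIV. quad_char (\<eta> + 2*\<rho>) * h \<eta>) = (\<Sum>\<eta>\<in>UNIV. quad_char \<eta> * h (\<eta> + 2*(-\<rho>)))"
    using sum_reindex_shift[of "\<lambda>\<eta>. quad_char (\<eta> + 2*\<rho>) * h \<eta>" "- 2*\<rho>"] by simp
  ultimately show ?thesis
    using sum_quad_char_fibres[OF odd 3(1), of h] 3(2) by (simp add: distrib_right sum.distrib)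
qed

text \<open>Factor \<open>(s + a)(s + b) = s (s + ab/s + a + b)\<close> and apply the twisted summation.\<close>

lemma sum_mult_char_quadratic:
  fixes D :: "'a::{field,finite} \<Rightarrow> complex" and a b :: 'a
  assumes odd: "odd CHAR('a)" and D: "mult_char D" "D \<noteq> triv_char"
  shows "(\<Sum>s\<in>UNIV. D s * (cnj (D ((s+a)*(s+b))) * quad_char ((s+a)*(s+b))))
       = jacobi quad_char D * (\<Sum>\<sigma>\<in>{\<sigma>. \<sigma>^2 = a*b}. cnj (D (a + b + 2*\<sigma>)))"
proof -
  define h where "h \<eta> = cnj (D (\<eta> + (a + b))) * quad_char (\<eta> + (a + b))" for \<eta>
  have "(\<Sum>s\<in>UNIV. D s * (cnj (D ((s+a)*(s+b))) * quad_char ((s+a)*(s+b))))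
      = (\<Sum>s\<in>UNIV. quad_char s * h (s + (a*b)/s))"
  proof (rule sum.cong[OF refl])
    fix s :: 'a
    show "D s * (cnj (D ((s+a)*(s+b))) * quad_char ((s+a)*(s+b))) = quad_char s * h (s + (a*b)/s)"
    proof (cases "s = 0")
      case False
      hence "(s+a)*(s+b) = s * (s + (a*b)/s + (a + b))" by (simp add: field_simps)
      moreover have "D s * cnj (D s) = 1" using cnj_mult_char_mult[OF D(1) False] by (simp add: mult.commute)
      ultimately show ?thesis unfolding h_def
        by (simp add: mult_char_mult[OF D(1)] quad_char_mult[OF odd] mult.commute mult.left_commute)
    qed (simp add: mult_char_zero[OF D(1)] quad_char_def)
  qed
  also have "\<dots> = (\<Sum>\<sigma>\<in>{\<sigma>. \<sigma>^2 = a*b}. \<Sum>\<eta>\<in>UNIV. quad_char \<eta> * h (\<eta> + 2*\<sigma>))"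
    by (rule sum_quad_char_twisted[OF odd])
  also have "\<dots> = (\<Sum>\<sigma>\<in>{\<sigma>. \<sigma>^2 = a*b}. cnj (D (a + b + 2*\<sigma>)) * jacobi quad_char D)"
    using sum_quad_char_shift[OF odd D, of "a + b + 2*_"] by (simp add: h_def algebra_simps)
  finally show ?thesis by (simp add: sum_distrib_left mult.commute)
qed

section \<open>The inner sums of the left-hand period\<close>

text \<open>\<open>period_kernel D t m\<close> is the inner sum \<open>W\<^sub>m\<close>; \<open>fibre_set x m\<close> is the level set of
\<open>y \<mapsto> (1 - y)(1 - x y)\<close>.\<close>

definition period_kernel :: "('a::{field,finite} \<Rightarrow> complex) \<Rightarrow> 'a \<Rightarrow> 'a \<Rightarrow> complex" where
  "period_kernel D t m =
     (\<Sum>Y\<in>UNIV. D Y * D ((1 - m) - (1 - m*t)*Y) * (cnj (D (1 - t*Y)) * quad_char (1 - t*Y)))"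

definition fibre_set :: "'a::field \<Rightarrow> 'a \<Rightarrow> 'a set" where
  "fibre_set x m = {y. (1 - y) * (1 - x*y) = m}"

text \<open>The substitution \<open>Y = \<alpha> / (s + \<beta>)\<close>.\<close>

lemma sum_mult_char_moebius:
  fixes D :: "'a::{field,finite} \<Rightarrow> complex"
  assumes odd: "odd CHAR('a)" and D: "mult_char D" and a0: "\<alpha> \<noteq> 0" and bg: "\<beta> - t*\<alpha> = \<gamma>"
  shows "(\<Sum>Y\<in>UNIV. D Y * D (\<alpha> - \<beta>*Y) * (cnj (D (1 - t*Y)) * quad_char (1 - t*Y)))
       = D \<alpha> * D \<alpha> * (\<Sum>s\<in>UNIV. D s * (cnj (D ((s+\<beta>)*(s+\<gamma>))) * quad_char ((s+\<beta>)*(s+\<gamma>))))"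
proof -
  let ?F = "\<lambda>Y. D Y * D (\<alpha> - \<beta>*Y) * (cnj (D (1 - t*Y)) * quad_char (1 - t*Y))"
  have "(\<Sum>Y\<in>UNIV. ?F Y) = (\<Sum>s\<in>UNIV. ?F (\<alpha> * inverse (s + \<beta>)))"
    using sum_reindex_inverse[OF a0, of ?F] sum_reindex_shift[of "\<lambda>s. ?F (\<alpha> * inverse s)" \<beta>] by simp
  also have "\<dots> = (\<Sum>s\<in>UNIV. D \<alpha> * D \<alpha> * (D s * (cnj (D ((s+\<beta>)*(s+\<gamma>))) * quad_char ((s+\<beta>)*(s+\<gamma>)))))"
  proof (rule sum.cong[OF refl])
    fix s
    show "?F (\<alpha> * inverse (s + \<beta>)) = D \<alpha> * D \<alpha> * (D s * (cnj (D ((s+\<beta>)*(s+\<gamma>))) * quad_char ((s+\<beta>)*(s+\<gamma>))))"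
    proof (cases "s + \<beta> = 0")
      case False
      define w where "w = s + \<beta>"
      have w0: "w \<noteq> 0" using False w_def by simp
      have e: "\<alpha> * inverse (s + \<beta>) = \<alpha> * inverse w" "\<alpha> - \<beta> * (\<alpha> * inverse w) = \<alpha> * s * inverse w"
        "1 - t * (\<alpha> * inverse w) = (s + \<gamma>) * inverse w" "(s+\<beta>)*(s+\<gamma>) = w * (s + \<gamma>)"
        using w0 bg by (simp_all add: w_def field_simps)
      have "quad_char (inverse w) = quad_char w"
        using mult_char_inverse[OF mult_char_quad_char[OF odd], of w] by simp
      hence "?F (\<alpha> * inverse (s + \<beta>)) =
          (D \<alpha> * D \<alpha> * (D s * (cnj (D w) * cnj (D (s + \<gamma>))) * (quad_char w * quad_char (s + \<gamma>)))) * (cnj (D w) * D w)"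
        unfolding e by (simp add: mult_char_mult[OF D] mult_char_inverse[OF D] quad_char_mult[OF odd] ac_simps)
      thus ?thesis unfolding cnj_mult_char_mult[OF D w0] e
        by (simp add: mult_char_mult[OF D] quad_char_mult[OF odd] ac_simps)
    qed (simp add: mult_char_zero[OF D])
  qed
  finally show ?thesis by (simp add: sum_distrib_left)
qed

lemma bij_betw_affine_preimage:
  fixes a b :: "'a::field"
  assumes "a \<noteq> 0" shows "bij_betw (\<lambda>y. a*y + b) {y. P (a*y + b)} {z. P z}"
  by (rule bij_betw_byWitness[where f'="\<lambda>z. (z - b) / a"]) (use assms in auto)

text \<open>After the affine change of variables \<open>y \<mapsto> \<sigma>\<close> below, the fibre equation \<open>(1 - y)(1 - x y) = m\<close>
becomes \<open>\<sigma>\<^sup>2 = (1 - m t)(1 - t)\<close>.\<close>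

lemma fibre_discriminant:
  fixes x y m :: "'a::field"
  assumes "1 - x \<noteq> 0"
  shows "((1+x)*((1+x) - 2*x*y)/(1-x)^2)^2 - (1 - m*(-4*x/(1-x)^2))*(1 - (-4*x/(1-x)^2))
       = (4*x*(1+x)^2/(1-x)^4) * ((1-y)*(1-x*y) - m)"
proof -
  have "(1-x)^2 \<noteq> 0" "(1-x)^4 \<noteq> 0" using assms by auto
  thus ?thesis by (simp add: field_simps) (simp add: power2_eq_square power4_eq_xxxx algebra_simps)
qed

lemma bij_betw_fibre_roots:
  fixes x m :: "'a::{field,finite}"
  assumes odd: "odd CHAR('a)" and x0: "x \<noteq> 0" and x1: "x \<noteq> 1" and xm1: "1 + x \<noteq> 0"
  defines "t \<equiv> -4*x/(1-x)^2"
  shows "bij_betw (\<lambda>y. (1+x)*((1+x) - 2*x*y)/(1-x)^2) (fibre_set x m) {\<sigma>. \<sigma>^2 = (1 - m*t)*(1 - t)}"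
proof -
  have u0: "1 - x \<noteq> 0" using x1 by simp
  define a where "a = - 2*x*(1+x)/(1-x)^2"
  define b where "b = (1+x)^2/(1-x)^2"
  have affine: "(\<lambda>y. (1+x)*((1+x) - 2*x*y)/(1-x)^2) = (\<lambda>y. a*y + b)"
  proof
    fix y
    have "(1+x)*((1+x) - 2*x*y) = (- 2*x*(1+x))*y + (1+x)^2" by (simp add: power2_eq_square algebra_simps)
    thus "(1+x)*((1+x) - 2*x*y)/(1-x)^2 = a*y + b" by (simp add: a_def b_def add_divide_distrib diff_divide_distrib)
  qed
  have c: "4*x*(1+x)^2/(1-x)^4 \<noteq> 0" using x0 xm1 u0 four_neq_zero[OF odd] by simp
  have "(a*y + b)^2 = (1 - m*t)*(1 - t) \<longleftrightarrow> (1-y)*(1-x*y) = m" for y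
  proof -
    have "(a*y + b)^2 - (1 - m*t)*(1 - t) = (4*x*(1+x)^2/(1-x)^4) * ((1-y)*(1-x*y) - m)"
      using fibre_discriminant[OF u0, of y m] fun_cong[OF affine, of y] by (simp add: t_def)
    hence "(a*y + b)^2 - (1 - m*t)*(1 - t) = 0 \<longleftrightarrow> (1-y)*(1-x*y) - m = 0" using c by simp
    thus ?thesis by (simp only: eq_iff_diff_eq_0[symmetric])
  qed
  hence "fibre_set x m = {y. (a*y + b)^2 = (1 - m*t)*(1 - t)}" by (simp add: fibre_set_def)
  moreover have "a \<noteq> 0" using x0 xm1 u0 two_neq_zero[OF odd] by (simp add: a_def)
  ultimately show ?thesis
    unfolding affine using bij_betw_affine_preimage[where P="\<lambda>z. z^2 = (1 - m*t)*(1 - t)"] by simp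
qed

lemma one_minus_param_square:
  fixes x :: "'a::field"
  assumes "x \<noteq> 1" shows "1 - (-4*x/(1-x)^2) = ((1+x)/(1-x))^2"
proof -
  have "(1-x)^2 \<noteq> 0" using assms by simp
  thus ?thesis by (simp add: field_simps) algebra
qed

lemma card_fibre_set:
  fixes x m :: "'a::{field,finite}"
  assumes odd: "odd CHAR('a)" and x0: "x \<noteq> 0" and x1: "x \<noteq> 1" and xm1: "1 + x \<noteq> 0"
  shows "of_nat (card (fibre_set x m)) = 1 + quad_char (1 - m * (-4*x/(1-x)^2))"
proof -
  let ?t = "-4*x/(1-x)^2"
  have "quad_char (1 - ?t) = 1" using one_minus_param_square[OF x1] xm1 x1 by (simp add: quad_char_power2)
  thus ?thesis
    using bij_betw_same_card[OF bij_betw_fibre_roots[OF odd x0 x1 xm1, of m]] card_sqrt[OF odd]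
    by (simp add: quad_char_mult[OF odd])
qed

lemma fibre_set_one:
  fixes x :: "'a::field"
  assumes "x \<noteq> 0" shows "fibre_set x 1 = {0, (1+x)/x}"
proof (intro set_eqI)
  fix y
  have "(1 - y) * (1 - x*y) = 1 \<longleftrightarrow> y * (x*y - (1+x)) = 0" by (simp add: algebra_simps)
  also have "\<dots> \<longleftrightarrow> y = 0 \<or> x*y = 1+x" by simp
  also have "\<dots> \<longleftrightarrow> y = 0 \<or> y = (1+x)/x" using assms by (auto simp: eq_divide_eq mult.commute)
  finally show "y \<in> fibre_set x 1 \<longleftrightarrow> y \<in> {0, (1+x)/x}" by (simp add: fibre_set_def)
qed

lemma fibre_root_sum:
  fixes x y m :: "'a::field"
  assumes "1 - x \<noteq> 0"
  shows "(1 - m*(-4*x/(1-x)^2)) + (1 - (-4*x/(1-x)^2)) + 2*((1+x)*((1+x) - 2*x*y)/(1-x)^2)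
       = 4*((1+x) - x*y)^2/(1-x)^2 + 4*x*(m - (1-y)*(1-x*y))/(1-x)^2"
proof -
  have "(1-x)^2 \<noteq> 0" using assms by auto
  thus ?thesis by (simp add: field_simps) algebra
qed

text \<open>On the fibre, \<open>1 - m = y w\<close> and \<open>(1 - m t) + (1 - t) + 2\<sigma> = 4 w\<^sup>2 / (1 - x)\<^sup>2\<close> with
\<open>w = 1 + x - x y\<close>, so all factors except \<open>D(y)\<^sup>2\<close> cancel.\<close>

lemma fibre_term:
  fixes D :: "'a::{field,finite} \<Rightarrow> complex" and x y m :: 'a
  assumes odd: "odd CHAR('a)" and D: "mult_char D" and u0: "1 - x \<noteq> 0"
    and y: "y \<in> fibre_set x m" and m1: "m \<noteq> 1"
  defines "t \<equiv> -4*x/(1-x)^2"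
  shows "cnj (D (1-x)) * cnj (D (1-x)) * (D (1-m) * D (1-m)) * D 4
           * cnj (D ((1 - m*t) + (1 - t) + 2*((1+x)*((1+x) - 2*x*y)/(1-x)^2))) = D y * D y"
proof -
  define w where "w = (1+x) - x*y"
  have fib: "(1-y)*(1-x*y) = m" using y by (simp add: fibre_set_def)
  hence al: "1 - m = y * w" by (simp add: w_def algebra_simps)
  hence w0: "w \<noteq> 0" using m1 by auto
  have "(1 - m*t) + (1 - t) + 2*((1+x)*((1+x) - 2*x*y)/(1-x)^2) = 4 * (w*w) * (inverse (1-x) * inverse (1-x))"
    using fibre_root_sum[OF u0, of m y] fib by (simp add: t_def w_def power2_eq_square divide_inverse ac_simps)
  hence "cnj (D (1-x)) * cnj (D (1-x)) * (D (1-m) * D (1-m)) * D 4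
           * cnj (D ((1 - m*t) + (1 - t) + 2*((1+x)*((1+x) - 2*x*y)/(1-x)^2)))
      = (D y * D y) * (cnj (D (1-x)) * D (1-x)) * (cnj (D (1-x)) * D (1-x)) * (cnj (D 4) * D 4)
          * (cnj (D w) * D w) * (cnj (D w) * D w)"
    unfolding al by (simp add: mult_char_mult[OF D] mult_char_inverse[OF D] ac_simps)
  thus ?thesis
    unfolding cnj_mult_char_mult[OF D u0] cnj_mult_char_mult[OF D w0] cnj_mult_char_mult[OF D four_neq_zero[OF odd]]
    by simp
qed

lemma period_kernel_eq:
  fixes D :: "'a::{field,finite} \<Rightarrow> complex" and x m :: 'a
  assumes odd: "odd CHAR('a)" and D: "mult_char D" "D \<noteq> triv_char"
    and x0: "x \<noteq> 0" and x1: "x \<noteq> 1" and xm1: "1 + x \<noteq> 0" and m1: "m \<noteq> 1"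
  defines "t \<equiv> -4*x/(1-x)^2"
  shows "cnj (D (1-x)) * cnj (D (1-x)) * period_kernel D t m = jacobi D D * (\<Sum>y\<in>fibre_set x m. D y * D y)"
proof -
  let ?\<beta> = "1 - m*t" and ?\<gamma> = "1 - t"
  let ?s = "\<lambda>y. (1+x)*((1+x) - 2*x*y)/(1-x)^2"
  have "period_kernel D t m
      = D (1-m) * D (1-m) * (\<Sum>s\<in>UNIV. D s * (cnj (D ((s+?\<beta>)*(s+?\<gamma>))) * quad_char ((s+?\<beta>)*(s+?\<gamma>))))"
    unfolding period_kernel_def using m1 by (intro sum_mult_char_moebius[OF odd D(1)]) (auto simp: algebra_simps)
  also have "\<dots> = D (1-m) * D (1-m) * (jacobi quad_char D * (\<Sum>\<sigma>\<in>{\<sigma>. \<sigma>^2 = ?\<beta> * ?\<gamma>}. cnj (D (?\<beta> + ?\<gamma> + 2*\<sigma>))))"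
    by (simp only: sum_mult_char_quadratic[OF odd D])
  also have "(\<Sum>\<sigma>\<in>{\<sigma>. \<sigma>^2 = ?\<beta> * ?\<gamma>}. cnj (D (?\<beta> + ?\<gamma> + 2*\<sigma>))) = (\<Sum>y\<in>fibre_set x m. cnj (D (?\<beta> + ?\<gamma> + 2*?s y)))"
    using sum.reindex_bij_betw[OF bij_betw_fibre_roots[OF odd x0 x1 xm1, of m], of "\<lambda>\<sigma>. cnj (D (?\<beta> + ?\<gamma> + 2*\<sigma>))"]
    unfolding t_def by simp
  finally have "cnj (D (1-x)) * cnj (D (1-x)) * period_kernel D t m
      = jacobi D D * (\<Sum>y\<in>fibre_set x m. cnj (D (1-x)) * cnj (D (1-x)) * (D (1-m) * D (1-m)) * D 4
                                               * cnj (D (?\<beta> + ?\<gamma> + 2*?s y)))"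
    by (simp add: jacobi_quad_char[OF odd D] sum_distrib_left ac_simps)
  also have "\<dots> = jacobi D D * (\<Sum>y\<in>fibre_set x m. D y * D y)"
    using fibre_term[OF odd D(1) _ _ m1] x1 unfolding t_def by (intro arg_cong[where f="(*) _"] sum.cong) auto
  finally show ?thesis .
qed

lemma period_kernel_one_factor:
  fixes D :: "'a::{field,finite} \<Rightarrow> complex" and x :: 'a
  assumes odd: "odd CHAR('a)" and D: "mult_char D" and x0: "x \<noteq> 0" and x1: "x \<noteq> 1"
  defines "t \<equiv> -4*x/(1-x)^2"
  shows "cnj (D (1-x)) * cnj (D (1-x)) * D (t - 1) * cnj (D t) * cnj (D t) * (D (-1) * D 4 * D 4)
       = D ((1+x)/x) * D ((1+x)/x)"
proof -
  have u0: "1 - x \<noteq> 0" using x1 by simp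
  have "t - 1 = - ((1+x)^2/(1-x)^2)"
    using one_minus_param_square[OF x1] unfolding t_def by (metis minus_diff_eq power_divide)
  also have "\<dots> = (-1) * ((1+x) * (1+x) * (inverse (1-x) * inverse (1-x)))"
    by (simp add: power2_eq_square divide_inverse)
  finally have n1: "D (t - 1) = D (-1) * D ((1+x) * (1+x) * (inverse (1-x) * inverse (1-x)))"
    by (simp only: mult_char_mult[OF D])
  have "t = (-1) * (4 * x * (inverse (1-x) * inverse (1-x)))"
    by (simp add: t_def power2_eq_square divide_inverse ac_simps)
  hence n2: "D t = D (-1) * D (4 * x * (inverse (1-x) * inverse (1-x)))"
    by (simp only: mult_char_mult[OF D])
  have "cnj (D (1-x)) * cnj (D (1-x)) * D (t - 1) * cnj (D t) * cnj (D t) * (D (-1) * D 4 * D 4)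
      = D ((1+x)/x) * D ((1+x)/x) * (cnj (D (1-x)) * D (1-x)) * (cnj (D (1-x)) * D (1-x))
          * (cnj (D (1-x)) * D (1-x)) * (cnj (D (1-x)) * D (1-x)) * (cnj (D 4) * D 4) * (cnj (D 4) * D 4)
          * (cnj (D (-1)) * D (-1)) * (cnj (D (-1)) * D (-1))"
    unfolding n1 n2 by (simp add: divide_inverse mult_char_mult[OF D] mult_char_inverse[OF D] ac_simps)
  moreover have "cnj (D (-1)) * D (-1) = 1" by (rule cnj_mult_char_mult[OF D]) simp
  ultimately show ?thesis
    unfolding cnj_mult_char_mult[OF D u0] cnj_mult_char_mult[OF D four_neq_zero[OF odd]] by simp
qed

text \<open>For \<open>m = 1\<close> the kernel is a multiple of \<open>J(D\<^sup>2, D\<^sup>*\<phi>)\<close> (substitute \<open>Y = Z/t\<close>), and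
\<open>0 \<in> fibre_set x 1\<close> does not contribute.\<close>

lemma period_kernel_eq_one:
  fixes D :: "'a::{field,finite} \<Rightarrow> complex" and x :: 'a
  assumes odd: "odd CHAR('a)" and D: "mult_char D" "D \<noteq> triv_char" "D \<noteq> quad_char"
    and x0: "x \<noteq> 0" and x1: "x \<noteq> 1" and xm1: "1 + x \<noteq> 0"
  defines "t \<equiv> -4*x/(1-x)^2"
  shows "cnj (D (1-x)) * cnj (D (1-x)) * period_kernel D t 1 = jacobi D D * (\<Sum>y\<in>fibre_set x 1. D y * D y)"
proof -
  have t0: "t \<noteq> 0" using x0 x1 four_neq_zero[OF odd] by (simp add: t_def)
  let ?C = "\<lambda>z. D z * D z" and ?E = "\<lambda>z. cnj (D z) * quad_char z"
  have "period_kernel D t 1 = (\<Sum>Y\<in>UNIV. D (t - 1) * (?C Y * ?E (1 - t*Y)))"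
    unfolding period_kernel_def
  proof (rule sum.cong[OF refl])
    fix Y :: 'a
    have "(1 - 1) - (1 - 1*t)*Y = (t - 1) * Y" by (simp add: algebra_simps)
    thus "D Y * D ((1 - 1) - (1 - 1*t)*Y) * (cnj (D (1 - t*Y)) * quad_char (1 - t*Y)) = D (t - 1) * (?C Y * ?E (1 - t*Y))"
      by (simp add: mult_char_mult[OF D(1)] ac_simps)
  qed
  also have "\<dots> = D (t - 1) * (\<Sum>Z\<in>UNIV. ?C (inverse t * Z) * ?E (1 - t*(inverse t * Z)))"
    using sum_reindex_scale[of "inverse t" "\<lambda>Y. ?C Y * ?E (1 - t*Y)"] t0 by (simp add: sum_distrib_left)
  also have "\<dots> = D (t - 1) * (cnj (D t) * cnj (D t) * jacobi ?C ?E)"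
    using t0 by (simp add: jacobi_def sum_distrib_left mult_char_mult[OF D(1)] mult_char_inverse[OF D(1)] ac_simps)
  finally have "cnj (D (1-x)) * cnj (D (1-x)) * period_kernel D t 1 = D ((1+x)/x) * D ((1+x)/x) * jacobi D D"
    using period_kernel_one_factor[OF odd D(1) x0 x1] unfolding jacobi_square_cnj_quad_char[OF odd D] t_def
    by (simp add: ac_simps)
  moreover have "(1+x)/x \<noteq> 0" using x0 xm1 by simp
  ultimately show ?thesis using fibre_set_one[OF x0] mult_char_zero[OF D(1)] by simp
qed

lemma sum_triv_char_fibre_set:
  fixes x m :: "'a::{field,finite}"
  assumes odd: "odd CHAR('a)" and x0: "x \<noteq> 0" and x1: "x \<noteq> 1" and xm1: "1 + x \<noteq> 0"
  shows "(\<Sum>y\<in>fibre_set x m. triv_char y * triv_char y)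
       = 1 + quad_char (1 - m * (-4*x/(1-x)^2)) - (if m = 1 then 1 else 0)"
proof -
  have "(\<Sum>y\<in>fibre_set x m. triv_char y * triv_char y) = (\<Sum>y\<in>fibre_set x m - {0}. triv_char y * triv_char y)"
    by (rule sum.mono_neutral_right) (auto simp: triv_char_def)
  also have "\<dots> = of_nat (card (fibre_set x m - {0}))" by (simp add: triv_char_def)
  also have "\<dots> = of_nat (card (fibre_set x m)) - (if m = 1 then 1 else 0)"
  proof (cases "m = 1")
    case True
    hence "0 \<in> fibre_set x m" by (simp add: fibre_set_def)
    moreover from this have "card (fibre_set x m) \<ge> 1" by (metis One_nat_def Suc_leI card_gt_0_iff empty_iff finite)
    ultimately show ?thesis using True by (simp add: card_Diff_singleton of_nat_diff)
  qed (simp add: fibre_set_def)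
  finally show ?thesis using card_fibre_set[OF odd x0 x1 xm1, of m] by simp
qed

lemma period_kernel_triv:
  fixes x m :: "'a::{field,finite}"
  assumes odd: "odd CHAR('a)" and x0: "x \<noteq> 0" and x1: "x \<noteq> 1" and xm1: "1 + x \<noteq> 0"
  defines "t \<equiv> -4*x/(1-x)^2"
  shows "period_kernel triv_char t m = - (\<Sum>y\<in>fibre_set x m. triv_char y * triv_char y)"
proof -
  let ?\<alpha> = "1 - m" and ?\<beta> = "1 - m*t"
  let ?Z = "{Y. Y \<noteq> 0 \<and> ?\<alpha> = ?\<beta> * Y}"
  have t0: "t \<noteq> 0" using x0 x1 four_neq_zero[OF odd] by (simp add: t_def)
  have "1 - t = ((1+x)/(1-x))^2" unfolding t_def by (rule one_minus_param_square[OF x1])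
  hence g0: "1 - t \<noteq> 0" and qg: "quad_char (1 - t) = 1" using x1 xm1 by (simp_all add: quad_char_power2)
  have "period_kernel triv_char t m
      = (\<Sum>Y\<in>UNIV. quad_char (1 - t*Y) - (if Y = 0 then quad_char (1 - t*Y) else 0)
                    - (if Y \<in> ?Z then quad_char (1 - t*Y) else 0))"
    unfolding period_kernel_def by (intro sum.cong refl) (auto simp: triv_char_def quad_char_def)
  also have "\<dots> = - 1 - (\<Sum>Y\<in>?Z. quad_char (1 - t*Y))"
    using sum_reindex_affine[of "- t" quad_char 1] t0 sum_mult_char[OF mult_char_quad_char quad_char_neq_triv, OF odd odd]
    by (simp add: sum_subtractf sum.If_cases Int_def mult_char_one[OF mult_char_quad_char[OF odd]])
  also have "(\<Sum>Y\<in>?Z. quad_char (1 - t*Y)) = quad_char ?\<beta> - (if m = 1 then 1 else 0)"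
  proof (cases "m = 1 \<or> ?\<beta> = 0")
    case True
    hence "?Z = {}" using g0 by auto
    hence "(\<Sum>Y\<in>?Z. quad_char (1 - t*Y)) = 0" by (simp only: sum.empty)
    thus ?thesis using True qg by (auto simp: quad_char_def[of 0])
  next
    case False
    hence "?Z = {?\<alpha> / ?\<beta>}" by (auto simp: field_simps)
    moreover have "1 - t * (?\<alpha> / ?\<beta>) = (1 - t) * inverse ?\<beta>" using False by (simp add: field_simps)
    ultimately show ?thesis using False qg mult_char_inverse[OF mult_char_quad_char[OF odd], of ?\<beta>]
      by (simp add: quad_char_mult[OF odd])
  qed
  finally show ?thesis using sum_triv_char_fibre_set[OF odd x0 x1 xm1, of m] unfolding t_def by simp
qed

section \<open>The two periods\<close>

text \<open>Explicit forms of \<open>\<^sub>2P\<^sub>1[D\<phi>B\<^sup>*, D; D\<^sup>2B\<^sup>*; t]\<close> and \<open>\<^sub>2P\<^sub>1[B, D\<^sup>2; D\<^sup>2B\<^sup>*; x]\<close>.\<close>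

definition period_left :: "('a::{field,finite} \<Rightarrow> complex) \<Rightarrow> ('a \<Rightarrow> complex) \<Rightarrow> 'a \<Rightarrow> complex" where
  "period_left B D t = (\<Sum>Y\<in>UNIV. D Y * (D (1 - Y) * cnj (B (1 - Y)))
                          * (cnj (D (1 - t*Y)) * quad_char (1 - t*Y) * B (1 - t*Y)))"

definition period_right :: "('a::{field,finite} \<Rightarrow> complex) \<Rightarrow> ('a \<Rightarrow> complex) \<Rightarrow> 'a \<Rightarrow> complex" where
  "period_right B D x = (\<Sum>y\<in>UNIV. D y * D y * (cnj (B (1 - y)) * cnj (B (1 - x*y))))"

lemma jacobi_times_period_left:
  fixes B D :: "'a::{field,finite} \<Rightarrow> complex" and t :: 'a
  assumes D: "mult_char D" and B: "mult_char B" and BD: "B \<noteq> D"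
  shows "jacobi D (\<lambda>z. cnj (B z)) * period_left B D t = (\<Sum>m\<in>UNIV. cnj (B m) * period_kernel D t m)"
proof -
  let ?E = "\<lambda>u. cnj (D u) * quad_char u"
  have BD': "(\<lambda>x. cnj (B x) * D x) \<noteq> triv_char"
    using times_cnj_neq_triv[OF D B BD[symmetric]] by (simp add: mult.commute)
  have summand: "jacobi D (\<lambda>z. cnj (B z)) * (D Y * (D (1 - Y) * cnj (B (1 - Y))) * (?E (1 - t*Y) * B (1 - t*Y)))
      = D Y * ?E (1 - t*Y) * (\<Sum>m\<in>UNIV. cnj (B m) * D ((1 - Y) - (1 - t*Y) * m))" for Y
  proof (cases "1 - t*Y = 0")
    case False
    thus ?thesis
      using sum_mult_char_linear[OF mult_char_cnj[OF B] D BD' False, of "1 - Y"] jacobi_commute[of D]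
      by (simp add: ac_simps)
  qed (simp add: mult_char_zero[OF D])
  have "jacobi D (\<lambda>z. cnj (B z)) * period_left B D t
      = (\<Sum>Y\<in>UNIV. jacobi D (\<lambda>z. cnj (B z)) * (D Y * (D (1 - Y) * cnj (B (1 - Y))) * (?E (1 - t*Y) * B (1 - t*Y))))"
    unfolding period_left_def by (rule sum_distrib_left)
  also have "\<dots> = (\<Sum>Y\<in>UNIV. D Y * ?E (1 - t*Y) * (\<Sum>m\<in>UNIV. cnj (B m) * D ((1 - Y) - (1 - t*Y) * m)))"
    by (rule sum.cong[OF refl], rule summand)
  also have "\<dots> = (\<Sum>m\<in>UNIV. cnj (B m) * period_kernel D t m)"
    unfolding period_kernel_def sum_distrib_left
    by (subst sum.swap) (intro sum.cong refl, simp add: algebra_simps)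
  finally show ?thesis .
qed

lemma period_right_fibres:
  fixes B D :: "'a::{field,finite} \<Rightarrow> complex" and x :: 'a
  assumes B: "mult_char B"
  shows "period_right B D x = (\<Sum>m\<in>UNIV. cnj (B m) * (\<Sum>y\<in>fibre_set x m. D y * D y))"
proof -
  have "period_right B D x = (\<Sum>y\<in>UNIV. D y * D y * cnj (B ((1 - y) * (1 - x*y))))"
    by (simp add: period_right_def mult_char_mult[OF B])
  also have "\<dots> = (\<Sum>m\<in>UNIV. \<Sum>y\<in>{y \<in> UNIV. (1 - y) * (1 - x*y) = m}. D y * D y * cnj (B ((1 - y) * (1 - x*y))))"
    by (rule sum.group[symmetric]) auto
  also have "\<dots> = (\<Sum>m\<in>UNIV. cnj (B m) * (\<Sum>y\<in>fibre_set x m. D y * D y))"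
    by (rule sum.cong[OF refl]) (simp add: fibre_set_def sum_distrib_left ac_simps)
  finally show ?thesis .
qed

lemma period_transformation:
  fixes B D :: "'a::{field,finite} \<Rightarrow> complex" and x :: 'a
  assumes odd: "odd CHAR('a)" and D: "mult_char D" "D \<noteq> triv_char" "D \<noteq> quad_char"
    and B: "mult_char B" "B \<noteq> D" and x0: "x \<noteq> 0" and x1: "x \<noteq> 1" and xm1: "1 + x \<noteq> 0"
  shows "jacobi D (\<lambda>z. cnj (B z)) * (cnj (D (1-x)) * cnj (D (1-x))) * period_left B D (-4*x/(1-x)^2)
       = jacobi D D * period_right B D x"
proof -
  have kernel: "cnj (D (1-x)) * cnj (D (1-x)) * (cnj (B m) * period_kernel D (-4*x/(1-x)^2) m)
      = cnj (B m) * (jacobi D D * (\<Sum>y\<in>fibre_set x m. D y * D y))" for m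
    using period_kernel_eq[OF odd D(1,2) x0 x1 xm1] period_kernel_eq_one[OF odd D x0 x1 xm1]
    by (cases "m = 1") (simp_all add: ac_simps)
  have "jacobi D (\<lambda>z. cnj (B z)) * (cnj (D (1-x)) * cnj (D (1-x))) * period_left B D (-4*x/(1-x)^2)
      = cnj (D (1-x)) * cnj (D (1-x)) * (jacobi D (\<lambda>z. cnj (B z)) * period_left B D (-4*x/(1-x)^2))"
    by (simp only: ac_simps)
  also have "\<dots> = (\<Sum>m\<in>UNIV. cnj (D (1-x)) * cnj (D (1-x)) * (cnj (B m) * period_kernel D (-4*x/(1-x)^2) m))"
    unfolding jacobi_times_period_left[OF D(1) B] by (rule sum_distrib_left)
  also have "\<dots> = jacobi D D * period_right B D x"
    unfolding kernel period_right_fibres[OF B(1)] by (simp add: sum_distrib_left mult.left_commute)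
  finally show ?thesis .
qed

lemma period_transformation_triv:
  fixes B :: "'a::{field,finite} \<Rightarrow> complex" and x :: 'a
  assumes odd: "odd CHAR('a)" and B: "mult_char B" "B \<noteq> triv_char"
    and x0: "x \<noteq> 0" and x1: "x \<noteq> 1" and xm1: "1 + x \<noteq> 0"
  shows "period_left B triv_char (-4*x/(1-x)^2) = period_right B triv_char x"
proof -
  have "- period_left B triv_char (-4*x/(1-x)^2)
      = (\<Sum>m\<in>UNIV. cnj (B m) * period_kernel triv_char (-4*x/(1-x)^2) m)"
    using jacobi_times_period_left[OF mult_char_triv B(1) B(2)] jacobi_triv_left[OF mult_char_cnj[OF B(1)] cnj_char_neq_triv[OF B(2)]]
    by simp
  also have "\<dots> = (\<Sum>m\<in>UNIV. cnj (B m) * - (\<Sum>y\<in>fibre_set x m. triv_char y * triv_char y))"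
    by (simp only: period_kernel_triv[OF odd x0 x1 xm1])
  finally show ?thesis by (simp add: period_right_fibres[OF B(1)] sum_negf)
qed

section \<open>The transformation formula\<close>

lemma F21_left_eq:
  fixes B D :: "'a::{field,finite} \<Rightarrow> complex"
  assumes D: "mult_char D" and B: "mult_char B"
  shows "F21 (char_mult (char_mult D quad_char) (char_conj B)) D (char_mult (char_mult D D) (char_conj B)) t
       = period_left B D t / jacobi D (\<lambda>z. D z * cnj (B z))"
proof -
  have DB0: "D 0 * cnj (B 0) = 0" using mult_char_zero[OF D] by simp
  have "char_mult (char_conj D) (char_mult (char_mult D D) (char_conj B)) = (\<lambda>z. D z * cnj (B z))"
    using cnj_mult_char_times_self[OF D, where f="\<lambda>z. D z * cnj (B z)"] DB0
    by (simp add: char_mult_def char_conj_def fun_eq_iff ac_simps)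
  moreover have "char_mult (char_mult (char_mult D D) (char_conj B)) (char_conj D) = (\<lambda>z. D z * cnj (B z))"
    using cnj_mult_char_times_self[OF D, where f="\<lambda>z. D z * cnj (B z)"] DB0
    by (simp add: char_mult_def char_conj_def fun_eq_iff ac_simps)
  ultimately show ?thesis
    by (simp add: F21_def P21_def period_left_def char_mult_def char_conj_def ac_simps)
qed

lemma F21_right_eq:
  fixes B D :: "'a::{field,finite} \<Rightarrow> complex"
  assumes D: "mult_char D" and B: "mult_char B"
  shows "F21 B (char_mult D D) (char_mult (char_mult D D) (char_conj B)) x
       = period_right B D x / jacobi (\<lambda>z. D z * D z) (\<lambda>z. cnj (B z))"
proof -
  have sq: "char_mult D D = (\<lambda>z. D z * D z)" by (simp add: char_mult_def fun_eq_iff)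
  have "char_mult (char_conj (\<lambda>z. D z * D z)) (char_mult (\<lambda>z. D z * D z) (char_conj B)) = (\<lambda>z. cnj (B z))"
    using cnj_mult_char_times_self[OF mult_char_times[OF D D], where f="\<lambda>z. cnj (B z)"] mult_char_zero[OF B]
    by (simp add: char_mult_def char_conj_def fun_eq_iff ac_simps)
  moreover have "char_mult (char_mult (\<lambda>z. D z * D z) (char_conj B)) (char_conj (\<lambda>z. D z * D z)) = (\<lambda>z. cnj (B z))"
    using cnj_mult_char_times_self[OF mult_char_times[OF D D], where f="\<lambda>z. cnj (B z)"] mult_char_zero[OF B]
    by (simp add: char_mult_def char_conj_def fun_eq_iff ac_simps)
  ultimately show ?thesis unfolding sq
    by (simp add: F21_def P21_def period_right_def char_mult_def char_conj_def ac_simps)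
qed

text \<open>Clearing the normalising Jacobi sums uses
\<open>J(D, D) J(D\<^sup>2, B\<^sup>*) = J(D, D B\<^sup>*) J(D, B\<^sup>*)\<close>, which fails for trivial \<open>D\<close>; then all of
them are \<open>-1\<close> instead.\<close>

lemma normalized_transformation:
  fixes B D :: "'a::{field,finite} \<Rightarrow> complex" and L R :: complex
  assumes odd: "odd CHAR('a)" and D: "mult_char D" "D \<noteq> quad_char" and B: "mult_char B" "B \<noteq> D"
    and nontriv: "D \<noteq> triv_char \<Longrightarrow> jacobi D (\<lambda>z. cnj (B z)) * L = jacobi D D * R"
    and triv: "D = triv_char \<Longrightarrow> L = R"
  shows "L / jacobi D (\<lambda>z. D z * cnj (B z)) = R / jacobi (\<lambda>z. D z * D z) (\<lambda>z. cnj (B z))"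
proof (cases "D = triv_char")
  case True
  hence "B \<noteq> triv_char" using B(2) by simp
  hence "jacobi triv_char (\<lambda>z. cnj (B z)) = -1"
    using jacobi_triv_left[OF mult_char_cnj[OF B(1)]] cnj_char_neq_triv by blast
  moreover have "(\<lambda>z. triv_char z * cnj (B z)) = (\<lambda>z. cnj (B z))" "(\<lambda>z::'a. triv_char z * triv_char z) = triv_char"
    using mult_char_zero[OF B(1)] by (auto simp: triv_char_def fun_eq_iff)
  ultimately show ?thesis using True triv by simp
next
  case False
  have DB: "(\<lambda>z. D z * cnj (B z)) \<noteq> triv_char" using times_cnj_neq_triv[OF D(1) B(1)] B(2) by blast
  define J0 J1 J2 J3 where "J0 = jacobi D D" and "J1 = jacobi D (\<lambda>z. D z * cnj (B z))"
    and "J2 = jacobi (\<lambda>z. D z * D z) (\<lambda>z. cnj (B z))" and "J3 = jacobi D (\<lambda>z. cnj (B z))"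
  have assoc: "J0 * J2 = J1 * J3" unfolding J0_def J1_def J2_def J3_def
    by (rule jacobi_assoc[OF D(1) D(1) mult_char_cnj[OF B(1)] square_char_neq_triv[OF odd D(1) False D(2)] DB])
  have nz: "J1 \<noteq> 0" "J2 \<noteq> 0" "J3 \<noteq> 0"
    using jacobi_nonzero[OF D(1) mult_char_cnj[OF B(1)]] jacobi_square_cnj_nonzero[OF odd D B] False DB
      jacobi_nonzero[OF D(1) mult_char_times[OF D(1) mult_char_cnj[OF B(1)]]]
    by (auto simp: J1_def J2_def J3_def)
  have "J3 * (L * J2) = R * (J0 * J2)" using nontriv[OF False] by (simp add: J0_def J3_def ac_simps)
  also have "\<dots> = J3 * (R * J1)" by (simp add: assoc ac_simps)
  finally have "L * J2 = R * J1" using nz(3) by simp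
  thus ?thesis using nz(1,2) unfolding J1_def[symmetric] J2_def[symmetric] by (simp add: field_simps)
qed

lemma period_left_at_zero:
  fixes B D :: "'a::{field,finite} \<Rightarrow> complex"
  assumes "odd CHAR('a)" "mult_char D" "mult_char B"
  shows "period_left B D 0 = jacobi D (\<lambda>z. D z * cnj (B z))"
  using mult_char_one[OF assms(2)] mult_char_one[OF assms(3)] mult_char_one[OF mult_char_quad_char[OF assms(1)]]
  by (simp add: period_left_def jacobi_def mult.assoc)

lemma period_right_at_zero:
  fixes B D :: "'a::{field,finite} \<Rightarrow> complex"
  assumes "mult_char B"
  shows "period_right B D 0 = jacobi (\<lambda>z. D z * D z) (\<lambda>z. cnj (B z))"
  using mult_char_one[OF assms] by (simp add: period_right_def jacobi_def mult.assoc)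

lemma period_right_at_one: "period_right B D 1 = jacobi (\<lambda>z. D z * D z) (\<lambda>z. cnj (B z) * cnj (B z))"
  by (simp add: period_right_def jacobi_def mult.assoc)

lemma period_left_at_one:
  fixes B D :: "'a::{field,finite} \<Rightarrow> complex"
  assumes D: "mult_char D" and B: "mult_char B"
  shows "period_left B D 1 = jacobi D quad_char"
  unfolding period_left_def jacobi_def
proof (rule sum.cong[OF refl])
  fix Y :: 'a
  show "D Y * (D (1 - Y) * cnj (B (1 - Y))) * (cnj (D (1 - 1*Y)) * quad_char (1 - 1*Y) * B (1 - 1*Y))
      = D Y * quad_char (1 - Y)"
  proof (cases "Y = 1")
    case False
    hence "D Y * (D (1 - Y) * cnj (B (1 - Y))) * (cnj (D (1 - 1*Y)) * quad_char (1 - 1*Y) * B (1 - 1*Y))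
        = D Y * quad_char (1 - Y) * (cnj (D (1 - Y)) * D (1 - Y)) * (cnj (B (1 - Y)) * B (1 - Y))"
      by (simp add: ac_simps)
    thus ?thesis using cnj_mult_char_mult[OF D] cnj_mult_char_mult[OF B] False by simp
  qed (simp add: mult_char_zero[OF D] quad_char_def)
qed

lemma period_right_at_minus_one:
  fixes B D :: "'a::{field,finite} \<Rightarrow> complex"
  assumes odd: "odd CHAR('a)" and D: "mult_char D" and B: "mult_char B"
  shows "period_right B D (-1) = jacobi (\<lambda>w. D w * quad_char w) (\<lambda>z. cnj (B z)) + jacobi D (\<lambda>z. cnj (B z))"
proof -
  have "period_right B D (-1) = (\<Sum>y\<in>UNIV. D (y^2) * cnj (B (1 - y^2)))"
    unfolding period_right_def
  proof (rule sum.cong[OF refl])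
    fix y :: 'a
    have "(1 - y) * (1 - (-1) * y) = 1 - y^2" by (simp add: power2_eq_square algebra_simps)
    hence "cnj (B (1 - y)) * cnj (B (1 - (-1) * y)) = cnj (B (1 - y^2))"
      using mult_char_mult[OF B, of "1 - y" "1 - (-1) * y"] by simp
    moreover have "D y * D y = D (y^2)" by (simp add: power2_eq_square mult_char_mult[OF D])
    ultimately show "D y * D y * (cnj (B (1 - y)) * cnj (B (1 - (-1) * y))) = D (y^2) * cnj (B (1 - y^2))"
      by simp
  qed
  thus ?thesis using sum_quad_char_times[OF odd, of "\<lambda>w. D w * cnj (B (1 - w))"]
    by (simp add: jacobi_def ac_simps)
qed

lemma transformation_generic:
  fixes B D :: "'a::{field,finite} \<Rightarrow> complex" and x :: 'a
  assumes odd: "odd CHAR('a)" and D: "mult_char D" "D \<noteq> quad_char" and B: "mult_char B" "B \<noteq> D"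
    and x0: "x \<noteq> 0" and x1: "x \<noteq> 1" and xm1: "1 + x \<noteq> 0"
  shows "cnj (D (1-x)) * cnj (D (1-x)) * (period_left B D (-4*x/(1-x)^2) / jacobi D (\<lambda>z. D z * cnj (B z)))
       = period_right B D x / jacobi (\<lambda>z. D z * D z) (\<lambda>z. cnj (B z))"
  unfolding times_divide_eq_right
proof (rule normalized_transformation[OF odd D B])
  assume "D \<noteq> triv_char"
  thus "jacobi D (\<lambda>z. cnj (B z)) * (cnj (D (1-x)) * cnj (D (1-x)) * period_left B D (-4*x/(1-x)^2))
      = jacobi D D * period_right B D x"
    using period_transformation[OF odd D(1) _ D(2) B x0 x1 xm1] by (simp add: mult.assoc)
next
  assume "D = triv_char"
  thus "cnj (D (1-x)) * cnj (D (1-x)) * period_left B D (-4*x/(1-x)^2) = period_right B D x"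
    using period_transformation_triv[OF odd B(1) _ x0 x1 xm1] B(2) x1 by (simp add: triv_char_def)
qed

lemma transformation_at_minus_one:
  fixes B D :: "'a::{field,finite} \<Rightarrow> complex"
  assumes odd: "odd CHAR('a)" and D: "mult_char D" "D \<noteq> quad_char" and B: "mult_char B" "B \<noteq> D"
  shows "cnj (D 2) * cnj (D 2) * (period_left B D 1 / jacobi D (\<lambda>z. D z * cnj (B z)))
       = jacobi D (\<lambda>z. cnj (B z)) / jacobi (\<lambda>z. D z * D z) (\<lambda>z. cnj (B z))"
  unfolding times_divide_eq_right period_left_at_one[OF D(1) B(1)]
proof (rule normalized_transformation[OF odd D B])
  assume Dn: "D \<noteq> triv_char"
  have "cnj (D 2) * cnj (D 2) * D 4 = 1"
    using cnj_mult_char_mult[OF D(1) two_neq_zero[OF odd]] mult_char_mult[OF D(1), of 2 2] by (simp add: ac_simps)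
  thus "jacobi D (\<lambda>z. cnj (B z)) * (cnj (D 2) * cnj (D 2) * jacobi D quad_char) = jacobi D D * jacobi D (\<lambda>z. cnj (B z))"
    using jacobi_quad_char[OF odd D(1) Dn] jacobi_commute[of D quad_char]
    by (simp add: ac_simps)
next
  assume "D = triv_char"
  thus "cnj (D 2) * cnj (D 2) * jacobi D quad_char = jacobi D (\<lambda>z. cnj (B z))"
    using jacobi_triv_left[OF mult_char_quad_char quad_char_neq_triv, OF odd odd]
      jacobi_triv_left[OF mult_char_cnj[OF B(1)] cnj_char_neq_triv] B(2) two_neq_zero[OF odd]
    by (simp add: triv_char_def)
qed

lemma transformation_explicit:
  fixes B D :: "'a::{field,finite} \<Rightarrow> complex" and x :: 'a
  assumes odd: "odd CHAR('a)" and D: "mult_char D" "D \<noteq> quad_char" and B: "mult_char B" "B \<noteq> D"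
  defines "J1 \<equiv> jacobi D (\<lambda>z. D z * cnj (B z))" and "J2 \<equiv> jacobi (\<lambda>z. D z * D z) (\<lambda>z. cnj (B z))"
  shows "(if x = 1 then 0 else cnj (D (1-x)) * cnj (D (1-x)) * (period_left B D (-4*x/(1-x)^2) / J1))
       = period_right B D x / J2
         - kdelta (1 - x) * jacobi (\<lambda>z. D z * D z) (\<lambda>z. cnj (B z) * cnj (B z)) / J2
         - kdelta (1 + x) * jacobi (\<lambda>z. D z * quad_char z) (\<lambda>z. cnj (B z)) / J2"
proof -
  have two: "(2::'a) \<noteq> 0" by (rule two_neq_zero[OF odd])
  consider "x = 1" | "x = 0" | "x = -1" | "x \<noteq> 0" "x \<noteq> 1" "1 + x \<noteq> 0"
    by (metis add.commute add_eq_0_iff2)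
  thus ?thesis
  proof cases
    case 1
    thus ?thesis using two by (simp add: kdelta_def period_right_at_one)
  next
    case 2
    have "J1 \<noteq> 0" "J2 \<noteq> 0"
      using jacobi_nonzero[OF D(1) mult_char_times[OF D(1) mult_char_cnj[OF B(1)]]]
        times_cnj_neq_triv[OF D(1) B(1)] B(2) jacobi_square_cnj_nonzero[OF odd D B]
      by (auto simp: J1_def J2_def)
    thus ?thesis using 2 mult_char_one[OF D(1)]
      by (simp add: kdelta_def period_left_at_zero[OF odd D(1) B(1)] period_right_at_zero[OF B(1)] J1_def J2_def)
  next
    case 3
    have "(-4 * (-1) / (1 - (-1))^2 :: 'a) = 1" using four_neq_zero[OF odd] by (simp add: power2_eq_square)
    thus ?thesis using 3 two transformation_at_minus_one[OF odd D B]
      by (simp add: kdelta_def period_right_at_minus_one[OF odd D(1) B(1)] J1_def J2_def add_divide_distrib)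
  next
    case 4
    thus ?thesis using transformation_generic[OF odd D B] by (simp add: kdelta_def J1_def J2_def)
  qed
qed

theorem mainTheorem7:
  fixes B D :: "'a::{field,finite} \<Rightarrow> complex" and x :: 'a
  assumes "odd CHAR('a)"
    and "mult_char B" and "mult_char D"
    and "D \<noteq> quad_char" and "B \<noteq> D"
  defines "C \<equiv> char_mult D D"
  shows "(if x = 1 then 0 else
            char_conj C (1 - x) *
            F21 (char_mult (char_mult D quad_char) (char_conj B)) D (char_mult C (char_conj B))
                (- 4 * x / (1 - x) ^ 2))
       = F21 B C (char_mult C (char_conj B)) x
         - kdelta (1 - x) * jacobi C (char_mult (char_conj B) (char_conj B)) / jacobi C (char_conj B)
         - kdelta (1 + x) * jacobi (char_conj B) (char_mult D quad_char) / jacobi C (char_conj B)"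
proof -
  have sq: "char_mult D D = (\<lambda>z. D z * D z)" by (simp add: char_mult_def fun_eq_iff)
  have cnjB: "char_conj B = (\<lambda>z. cnj (B z))" by (simp add: char_conj_def fun_eq_iff)
  have "char_conj (char_mult D D) (1 - x) = cnj (D (1-x)) * cnj (D (1-x))"
    and "jacobi (char_mult D D) (char_conj B) = jacobi (\<lambda>z. D z * D z) (\<lambda>z. cnj (B z))"
    and "jacobi (char_mult D D) (char_mult (char_conj B) (char_conj B))
      = jacobi (\<lambda>z. D z * D z) (\<lambda>z. cnj (B z) * cnj (B z))"
    by (simp_all add: sq cnjB char_conj_def char_mult_def[abs_def])
  moreover have "jacobi (char_conj B) (char_mult D quad_char) = jacobi (\<lambda>z. D z * quad_char z) (\<lambda>z. cnj (B z))"
    by (subst jacobi_commute) (simp add: cnjB char_mult_def[abs_def])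
  ultimately show ?thesis
    unfolding C_def F21_left_eq[OF assms(3,2)] F21_right_eq[OF assms(3,2)]
    by (simp only: transformation_explicit[OF assms(1,3,4,2,5)])
qed

end
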